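(* Let $M$ be a finite rectangular monoid, $k$ a field which is a splitting field for the maximal subgroups of $M$, $X\in\Lambda(M)$, and $A$ a $k[G_X\times G_X^{op}]$-module regarded as an $M$-bimodule via $m\cdot a\cdot m'=\rho_X(m)a\rho_X(m')$. Then $H^1(M,A)\cong H^1(G_X,A)\oplus\mathrm{Hom}_{k[G_X\times G_X^{op}]}(V_{X,X},A)$. In particular, if the characteristic of $k$ does not divide $|G_X|$, then $H^1(M,A)\cong\mathrm{Hom}_{k[G_X\times G_X^{op}]}(V_{X,X},A)$.
   Context: $E(M)$ idempotents, $m^\omega$ idempotent power. $M$ rectangular: each $\{f\in E(M):MfM=MeM\}$ closed under multiplication. $\Lambda(M)$: ideals $MeM$, $e\in E(M)$; $\sigma(m)=Mm^\omega M$; $\sigma(m)\ge X$ means $X\subseteq\sigma(m)$; $\nabla X=\{m:X\not\subseteq MmM\}$. Fixed $e_X$ with $Me_XM=X$, $G_X$ the group of units of $e_XMe_X$, $\rho_X(m)=e_Xme_X$ if $\sigma(m)\ge X$ and $0$ otherwise. $I_X=e_XMe_X\setminus G_X$; $\sim$ is the least equivalence relation on $I_X$ such that $e_Xmne_X\sim e_Xme_Xne_X$ for all $m,n\in M$ with $\sigma(mn)\not\ge X$, and $z\sim z'$ for all $z,z'\in(\nabla X)(\nabla X)\cap I_X$. $V_{X,X}=kI_X/W_X$ where $W_X$ is spanned by $(\nabla X)(\nabla X)\cap I_X$ and all differences $m-n$ with $m\sim n$; it is a $G_X\times G_X^{op}$-module via left and right multiplication. $H^1(M,A)$ (resp. $H^1(G_X,A)$):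 derivations $d$ with $d(mn)=md(n)+d(m)n$ modulo inner derivations $m\mapsto ma-am$. *)

theory Defs
  imports Main "Jordan_Normal_Form.Matrix"
begin

definition idem :: "'m::monoid_mult \<Rightarrow> bool" where
  "idem e \<longleftrightarrow> e * e = e"

definition omega :: "'m::monoid_mult \<Rightarrow> 'm" where
  "omega m = (THE e. idem e \<and> (\<exists>n\<ge>1. m ^ n = e))"

definition ideal :: "'m::monoid_mult \<Rightarrow> 'm set" where
  "ideal m = {x * m * y | x y. True}"

definition sigma :: "'m::monoid_mult \<Rightarrow> 'm set" where
  "sigma m = ideal (omega m)"

definition Lambda :: "'m::monoid_mult itself \<Rightarrow> 'm set set" where
  "Lambda _ = {ideal e | e. idem e}"

definition rectangular :: "'m::monoid_mult itself \<Rightarrow> bool" where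
  "rectangular _ \<longleftrightarrow> (\<forall>e f g :: 'm. idem e \<and> idem f \<and> idem g \<and> ideal f = ideal e \<and> ideal g = ideal e
      \<longrightarrow> idem (f * g) \<and> ideal (f * g) = ideal e)"

definition nabla :: "'m::monoid_mult set \<Rightarrow> 'm set" where
  "nabla X = {m. \<not> X \<subseteq> ideal m}"

definition corner :: "'m::monoid_mult \<Rightarrow> 'm set" where
  "corner e = {e * m * e | m. True}"

definition units_at :: "'m::monoid_mult \<Rightarrow> 'm set" where
  "units_at e = {g \<in> corner e. \<exists>h \<in> corner e. g * h = e \<and> h * g = e}"

definition ginv :: "'m::monoid_mult \<Rightarrow> 'm \<Rightarrow> 'm" where
  "ginv e g = (THE h. h \<in> units_at e \<and> g * h = e \<and> h * g = e)"

definition irreducible_rep :: "nat \<Rightarrow> ('g \<Rightarrow> 'k::field mat) \<Rightarrow> 'g set \<Rightarrow> bool" where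
  "irreducible_rep n \<rho> G \<longleftrightarrow>
     (\<forall>W. W \<subseteq> carrier_vec n \<and> 0\<^sub>v n \<in> W \<and> (\<forall>u\<in>W. \<forall>v\<in>W. u + v \<in> W)
        \<and> (\<forall>c. \<forall>u\<in>W. c \<cdot>\<^sub>v u \<in> W) \<and> (\<forall>g\<in>G. \<forall>u\<in>W. \<rho> g *\<^sub>v u \<in> W)
        \<longrightarrow> W = {0\<^sub>v n} \<or> W = carrier_vec n)"

text \<open>k is a splitting field for the finite group G (with identity unit_e):
  every simple kG-module S has End_kG(S) = k.  Simple kG-modules are
  finite-dimensional, so they are realised as irreducible representations on k^n.\<close>
definition splitting_field :: "'k::field itself \<Rightarrow> 'm::monoid_mult set \<Rightarrow> 'm \<Rightarrow> bool" where
  "splitting_field _ G unit_e \<longleftrightarrow>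
     (\<forall>n (\<rho> :: 'm \<Rightarrow> 'k mat). n > 0 \<and> (\<forall>g\<in>G. \<rho> g \<in> carrier_mat n n)
        \<and> (\<forall>g\<in>G. \<forall>h\<in>G. \<rho> (g * h) = \<rho> g * \<rho> h) \<and> \<rho> unit_e = 1\<^sub>m n
        \<and> irreducible_rep n \<rho> G
        \<longrightarrow> (\<forall>T \<in> carrier_mat n n. (\<forall>g\<in>G. T * \<rho> g = \<rho> g * T) \<longrightarrow> (\<exists>c. T = c \<cdot>\<^sub>m 1\<^sub>m n)))"

definition splits_max_subgroups :: "'k::field itself \<Rightarrow> 'm::monoid_mult itself \<Rightarrow> bool" where
  "splits_max_subgroups K _ \<longleftrightarrow> (\<forall>e :: 'm. idem e \<longrightarrow> splitting_field K (units_at e) e)"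

type_synonym ('k, 'b) space = "'b set \<times> ('b \<Rightarrow> 'b \<Rightarrow> 'b) \<times> ('k \<Rightarrow> 'b \<Rightarrow> 'b)"

definition lin_iso :: "('k, 'b) space \<Rightarrow> ('k, 'c) space \<Rightarrow> bool" where
  "lin_iso S T \<longleftrightarrow> (case S of (C1, a1, s1) \<Rightarrow> case T of (C2, a2, s2) \<Rightarrow>
     (\<exists>\<Phi>. bij_betw \<Phi> C1 C2 \<and> (\<forall>x\<in>C1. \<forall>y\<in>C1. \<Phi> (a1 x y) = a2 (\<Phi> x) (\<Phi> y))
        \<and> (\<forall>c. \<forall>x\<in>C1. \<Phi> (s1 c x) = s2 c (\<Phi> x))))"

definition prod_space :: "('k, 'b) space \<Rightarrow> ('k, 'c) space \<Rightarrow> ('k, 'b \<times> 'c) space" where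
  "prod_space S T = (case S of (C1, a1, s1) \<Rightarrow> case T of (C2, a2, s2) \<Rightarrow>
     (C1 \<times> C2, \<lambda>x y. (a1 (fst x) (fst y), a2 (snd x) (snd y)), \<lambda>c x. (s1 c (fst x), s2 c (snd x))))"

definition coset :: "('b \<Rightarrow> 'b \<Rightarrow> 'b) \<Rightarrow> 'b set \<Rightarrow> 'b \<Rightarrow> 'b set" where
  "coset a I d = (\<lambda>i. a d i) ` I"

definition quot_space :: "('k, 'b) space \<Rightarrow> 'b set \<Rightarrow> ('k, 'b set) space" where
  "quot_space S I = (case S of (D, a, s) \<Rightarrow>
     (coset a I ` D,
      \<lambda>x y. {a u v | u v. u \<in> x \<and> v \<in> y},
      \<lambda>c x. {a (s c u) i | u i. u \<in> x \<and> i \<in> I}))"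

definition fadd :: "('x \<Rightarrow> 'a::plus) \<Rightarrow> ('x \<Rightarrow> 'a) \<Rightarrow> 'x \<Rightarrow> 'a" where
  "fadd f g = (\<lambda>x. f x + g x)"

definition fscale :: "('k \<Rightarrow> 'a \<Rightarrow> 'a) \<Rightarrow> 'k \<Rightarrow> ('x \<Rightarrow> 'a) \<Rightarrow> 'x \<Rightarrow> 'a" where
  "fscale sc c f = (\<lambda>x. sc c (f x))"

definition GGop_module :: "('k::field \<Rightarrow> 'a::ab_group_add \<Rightarrow> 'a) \<Rightarrow> ('m::monoid_mult \<Rightarrow> 'a \<Rightarrow> 'a)
     \<Rightarrow> ('a \<Rightarrow> 'm \<Rightarrow> 'a) \<Rightarrow> 'm set \<Rightarrow> 'm \<Rightarrow> bool" where
  "GGop_module scale lact ract G unit_e \<longleftrightarrow>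
     vector_space scale
     \<and> (\<forall>g\<in>G. \<forall>a b. lact g (a + b) = lact g a + lact g b \<and> ract (a + b) g = ract a g + ract b g)
     \<and> (\<forall>g\<in>G. \<forall>c a. lact g (scale c a) = scale c (lact g a) \<and> ract (scale c a) g = scale c (ract a g))
     \<and> (\<forall>a. lact unit_e a = a \<and> ract a unit_e = a)
     \<and> (\<forall>g\<in>G. \<forall>h\<in>G. \<forall>a. lact g (lact h a) = lact (g * h) a \<and> ract (ract a g) h = ract a (g * h))
     \<and> (\<forall>g\<in>G. \<forall>h\<in>G. \<forall>a. lact g (ract a h) = ract (lact g a) h)"

definition rho_left :: "'m::monoid_mult set \<Rightarrow> 'm \<Rightarrow> ('m \<Rightarrow> 'a::zero \<Rightarrow> 'a) \<Rightarrow> 'm \<Rightarrow> 'a \<Rightarrow> 'a" where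
  "rho_left X eX lact m a = (if X \<subseteq> sigma m then lact (eX * m * eX) a else 0)"

definition rho_right :: "'m::monoid_mult set \<Rightarrow> 'm \<Rightarrow> ('a::zero \<Rightarrow> 'm \<Rightarrow> 'a) \<Rightarrow> 'a \<Rightarrow> 'm \<Rightarrow> 'a" where
  "rho_right X eX ract a m = (if X \<subseteq> sigma m then ract a (eX * m * eX) else 0)"

definition Der_M :: "'m::monoid_mult set \<Rightarrow> 'm \<Rightarrow> ('m \<Rightarrow> 'a::ab_group_add \<Rightarrow> 'a) \<Rightarrow> ('a \<Rightarrow> 'm \<Rightarrow> 'a) \<Rightarrow> ('m \<Rightarrow> 'a) set" where
  "Der_M X eX lact ract = {d. \<forall>m n. d (m * n) = rho_left X eX lact m (d n) + rho_right X eX ract (d m) n}"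

definition Inn_M :: "'m::monoid_mult set \<Rightarrow> 'm \<Rightarrow> ('m \<Rightarrow> 'a::ab_group_add \<Rightarrow> 'a) \<Rightarrow> ('a \<Rightarrow> 'm \<Rightarrow> 'a) \<Rightarrow> ('m \<Rightarrow> 'a) set" where
  "Inn_M X eX lact ract = {(\<lambda>m. rho_left X eX lact m a - rho_right X eX ract a m) | a. True}"

definition H1_M :: "('k::field \<Rightarrow> 'a::ab_group_add \<Rightarrow> 'a) \<Rightarrow> 'm::monoid_mult set \<Rightarrow> 'm
     \<Rightarrow> ('m \<Rightarrow> 'a \<Rightarrow> 'a) \<Rightarrow> ('a \<Rightarrow> 'm \<Rightarrow> 'a) \<Rightarrow> ('k, ('m \<Rightarrow> 'a) set) space" where
  "H1_M scale X eX lact ract =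
     quot_space (Der_M X eX lact ract, fadd, fscale scale) (Inn_M X eX lact ract)"

definition Der_G :: "'m::monoid_mult set \<Rightarrow> ('m \<Rightarrow> 'a::ab_group_add \<Rightarrow> 'a) \<Rightarrow> ('a \<Rightarrow> 'm \<Rightarrow> 'a) \<Rightarrow> ('m \<Rightarrow> 'a) set" where
  "Der_G G lact ract = {d. (\<forall>g. g \<notin> G \<longrightarrow> d g = 0) \<and>
       (\<forall>g\<in>G. \<forall>h\<in>G. d (g * h) = lact g (d h) + ract (d g) h)}"

definition Inn_G :: "'m::monoid_mult set \<Rightarrow> ('m \<Rightarrow> 'a::ab_group_add \<Rightarrow> 'a) \<Rightarrow> ('a \<Rightarrow> 'm \<Rightarrow> 'a) \<Rightarrow> ('m \<Rightarrow> 'a) set" where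
  "Inn_G G lact ract = {(\<lambda>g. if g \<in> G then lact g a - ract a g else 0) | a. True}"

definition H1_G :: "('k::field \<Rightarrow> 'a::ab_group_add \<Rightarrow> 'a) \<Rightarrow> 'm::monoid_mult set
     \<Rightarrow> ('m \<Rightarrow> 'a \<Rightarrow> 'a) \<Rightarrow> ('a \<Rightarrow> 'm \<Rightarrow> 'a) \<Rightarrow> ('k, ('m \<Rightarrow> 'a) set) space" where
  "H1_G scale G lact ract = quot_space (Der_G G lact ract, fadd, fscale scale) (Inn_G G lact ract)"

definition I_X :: "'m::monoid_mult \<Rightarrow> 'm set" where
  "I_X eX = corner eX - units_at eX"

definition Zset :: "'m::monoid_mult set \<Rightarrow> 'm \<Rightarrow> 'm set" where
  "Zset X eX = {a * b | a b. a \<in> nabla X \<and> b \<in> nabla X} \<inter> I_X eX"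

definition gen_rel :: "'m::monoid_mult set \<Rightarrow> 'm \<Rightarrow> ('m \<times> 'm) set" where
  "gen_rel X eX = ({(eX * m * n * eX, eX * m * eX * n * eX) | m n. \<not> X \<subseteq> sigma (m * n)}
                   \<union> Zset X eX \<times> Zset X eX) \<inter> (I_X eX \<times> I_X eX)"

definition simX :: "'m::monoid_mult set \<Rightarrow> 'm \<Rightarrow> ('m \<times> 'm) set" where
  "simX X eX = Id_on (I_X eX) \<union> (gen_rel X eX \<union> (gen_rel X eX)\<inverse>)\<^sup>+"

definition kI :: "'m::monoid_mult \<Rightarrow> ('m \<Rightarrow> 'k::field) set" where
  "kI eX = {v. \<forall>y. y \<notin> I_X eX \<longrightarrow> v y = 0}"

definition delta :: "'m \<Rightarrow> 'm \<Rightarrow> 'k::field" where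
  "delta x = (\<lambda>y. if y = x then 1 else 0)"

definition W_gens :: "'m::monoid_mult set \<Rightarrow> 'm \<Rightarrow> ('m \<Rightarrow> 'k::field) set" where
  "W_gens X eX = {delta z | z. z \<in> Zset X eX} \<union>
                 {(\<lambda>y. delta a y - delta b y) | a b. (a, b) \<in> simX X eX}"

definition W_X :: "'m::monoid_mult set \<Rightarrow> 'm \<Rightarrow> ('m \<Rightarrow> 'k::field) set" where
  "W_X X eX = {(\<lambda>y. \<Sum>w\<in>t. r w * w y) | t r. finite t \<and> t \<subseteq> W_gens X eX}"

text \<open>G x G^op action on k I_X induced by x |-> g x h on the basis.\<close>
definition gact :: "'m::monoid_mult \<Rightarrow> 'm \<Rightarrow> 'm \<Rightarrow> ('m \<Rightarrow> 'k::field) \<Rightarrow> 'm \<Rightarrow> 'k" where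
  "gact eX g h v = (\<lambda>y. if y \<in> I_X eX then v (ginv eX g * y * ginv eX h) else 0)"

text \<open>Hom_{k[G x G^op]}(V_{X,X}, A), realised as k[G x G^op]-linear maps
  k I_X -> A vanishing on W_X (extended by 0 outside k I_X).\<close>
definition HomV :: "('k::field \<Rightarrow> 'a::ab_group_add \<Rightarrow> 'a) \<Rightarrow> 'm::monoid_mult set \<Rightarrow> 'm
     \<Rightarrow> ('m \<Rightarrow> 'a \<Rightarrow> 'a) \<Rightarrow> ('a \<Rightarrow> 'm \<Rightarrow> 'a) \<Rightarrow> (('m \<Rightarrow> 'k) \<Rightarrow> 'a) set" where
  "HomV scale X eX lact ract = {\<phi>.
      (\<forall>v. v \<notin> kI eX \<longrightarrow> \<phi> v = 0)
    \<and> (\<forall>u\<in>kI eX. \<forall>v\<in>kI eX. \<phi> (\<lambda>y. u y + v y) = \<phi> u + \<phi> v)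
    \<and> (\<forall>c. \<forall>v\<in>kI eX. \<phi> (\<lambda>y. c * v y) = scale c (\<phi> v))
    \<and> (\<forall>w\<in>W_X X eX. \<phi> w = 0)
    \<and> (\<forall>g\<in>units_at eX. \<forall>h\<in>units_at eX. \<forall>v\<in>kI eX.
         \<phi> (gact eX g h v) = lact g (ract (\<phi> v) h))}"

definition HomV_space :: "('k::field \<Rightarrow> 'a::ab_group_add \<Rightarrow> 'a) \<Rightarrow> 'm::monoid_mult set \<Rightarrow> 'm
     \<Rightarrow> ('m \<Rightarrow> 'a \<Rightarrow> 'a) \<Rightarrow> ('a \<Rightarrow> 'm \<Rightarrow> 'a) \<Rightarrow> ('k, ('m \<Rightarrow> 'k) \<Rightarrow> 'a) space" where
  "HomV_space scale X eX lact ract = (HomV scale X eX lact ract, fadd, fscale scale)"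

end

theory Submission
  imports Defs
begin

text \<open>
  In a rectangular monoid \<open>\<sigma>(m) \<ge> X\<close> holds exactly when \<open>e\<^sub>X m e\<^sub>X\<close> is a unit of
  \<open>e\<^sub>X M e\<^sub>X\<close>, and on these \<open>m\<close> the map \<open>m \<mapsto> e\<^sub>X m e\<^sub>X\<close> is multiplicative; so \<open>\<rho>\<^sub>X\<close> is
  an action and every derivation satisfies \<open>d m = d (e\<^sub>X m e\<^sub>X)\<close>. A derivation \<open>d\<close> of \<open>M\<close>
  is therefore determined by its restriction to \<open>G\<^sub>X\<close>, a derivation of \<open>G\<^sub>X\<close>, and by its
  values on \<open>I\<^sub>X\<close>, which respect \<open>\<sim>\<close>, vanish on \<open>(\<nabla>X)(\<nabla>X)\<close> and are
  \<open>G\<^sub>X \<times> G\<^sub>X\<^sup>o\<^sup>p\<close>-equivariant, i.e. form a homomorphism \<open>V\<^sub>X\<^sub>,\<^sub>X \<rightarrow> A\<close>. Conversely every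
  such pair glues to a derivation of \<open>M\<close>, and \<open>d\<close> is inner iff its restriction is inner and
  its values on \<open>I\<^sub>X\<close> vanish. When \<open>|G\<^sub>X|\<close> is invertible in \<open>k\<close>, averaging over \<open>G\<^sub>X\<close>
  shows that \<open>H\<^sup>1(G\<^sub>X, A) = 0\<close>.
\<close>

section \<open>Idempotent powers, ideals and corner monoids\<close>

lemma idem_power: "idem (x::'m::monoid_mult) \<Longrightarrow> k \<ge> 1 \<Longrightarrow> x ^ k = x"
proof (induction k)
  case (Suc k)
  then show ?case by (cases "k = 0") (auto simp: idem_def power_Suc2)
qed simp

lemma power_periodic:
  fixes m :: "'m::monoid_mult"
  assumes "m ^ a = m ^ (a + p)"
  shows "m ^ (a + k + q * p) = m ^ (a + k)"
proof (induction q)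
  case (Suc q)
  have "a + k + Suc q * p = (a + p) + (k + q * p)" by simp
  then have "m ^ (a + k + Suc q * p) = m ^ (a + p) * m ^ (k + q * p)"
    by (simp only: power_add)
  also have "\<dots> = m ^ a * m ^ (k + q * p)" using assms by simp
  also have "\<dots> = m ^ (a + k + q * p)" by (simp only: power_add[symmetric] add.assoc)
  finally show ?case using Suc.IH by simp
qed simp

lemma ex_idem_power:
  fixes m :: "'m::{monoid_mult,finite}"
  shows "\<exists>n\<ge>1. idem (m ^ n)"
proof -
  have "\<not> inj (\<lambda>i::nat. m ^ Suc i)"
    using finite_UNIV inj_on_finite[of "\<lambda>i::nat. m ^ Suc i" UNIV] by blast
  then obtain i j where "i < j" "m ^ Suc i = m ^ Suc j"
    unfolding inj_def by (metis linorder_neqE_nat)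
  then obtain a p where ap: "a \<ge> 1" "p \<ge> 1" "m ^ a = m ^ (a + p)"
    by (intro that[of "Suc i" "j - i"]) auto
  define n where "n = a * p"
  have "n \<ge> a" using ap(2) unfolding n_def by simp
  then have "m ^ n * m ^ n = m ^ (a + (n - a) + a * p)"
    by (simp add: power_add[symmetric] n_def)
  also have "\<dots> = m ^ (a + (n - a))" by (rule power_periodic[OF ap(3)])
  also have "\<dots> = m ^ n" using \<open>n \<ge> a\<close> by simp
  finally have "idem (m ^ n)" unfolding idem_def .
  moreover have "n \<ge> 1" using ap unfolding n_def by simp
  ultimately show ?thesis by blast
qed

lemma omega_idem_power:
  fixes m :: "'m::{monoid_mult,finite}"
  shows "\<exists>n\<ge>1. omega m = m ^ n \<and> idem (omega m)"
proof -
  obtain n where n: "n \<ge> 1" "idem (m ^ n)" using ex_idem_power[of m] by auto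
  have unique: "x = m ^ n" if "idem x" "k \<ge> 1" "m ^ k = x" for x k
  proof -
    have "x = (m ^ k) ^ n" using idem_power[of x n] that n by simp
    also have "\<dots> = (m ^ n) ^ k" by (simp only: power_mult[symmetric] mult.commute)
    finally show ?thesis using idem_power[OF n(2) that(2)] by simp
  qed
  have "omega m = m ^ n"
    unfolding omega_def
  proof (rule the_equality)
    show "idem (m ^ n) \<and> (\<exists>k\<ge>1. m ^ k = m ^ n)" using n by blast
  qed (use unique in blast)
  then show ?thesis using n by auto
qed

lemma mem_ideal_iff: "x \<in> ideal m \<longleftrightarrow> (\<exists>a b. x = a * m * b)"
  unfolding ideal_def by blast

lemma mem_ideal_self: "m \<in> ideal (m::'m::monoid_mult)"
  unfolding mem_ideal_iff by (rule exI[of _ 1], rule exI[of _ 1]) simp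

lemma ideal_subset_iff: "ideal e \<subseteq> ideal f \<longleftrightarrow> e \<in> ideal (f::'m::monoid_mult)"
proof
  assume "e \<in> ideal f"
  then obtain x y where e: "e = x * f * y" unfolding mem_ideal_iff by blast
  show "ideal e \<subseteq> ideal f"
  proof
    fix z assume "z \<in> ideal e"
    then obtain a b where "z = a * e * b" unfolding mem_ideal_iff by blast
    then have "z = (a * x) * f * (y * b)" using e by (simp add: mult.assoc)
    then show "z \<in> ideal f" unfolding mem_ideal_iff by blast
  qed
qed (use mem_ideal_self in blast)

lemma ideal_eqI: "a \<in> ideal b \<Longrightarrow> b \<in> ideal a \<Longrightarrow> ideal a = ideal (b::'m::monoid_mult)"
  using ideal_subset_iff by blast

lemma mem_ideal_mult_leftD: "x \<in> ideal (a * m) \<Longrightarrow> x \<in> ideal (m::'m::monoid_mult)"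
proof -
  assume "x \<in> ideal (a * m)"
  then obtain p q where "x = (p * a) * m * q" unfolding mem_ideal_iff by (auto simp: mult.assoc)
  then show ?thesis unfolding mem_ideal_iff by blast
qed

lemma mem_ideal_mult_rightD: "x \<in> ideal (m * a) \<Longrightarrow> x \<in> ideal (m::'m::monoid_mult)"
proof -
  assume "x \<in> ideal (m * a)"
  then obtain p q where "x = p * m * (a * q)" unfolding mem_ideal_iff by (auto simp: mult.assoc)
  then show ?thesis unfolding mem_ideal_iff by blast
qed

lemma idem_absorb:
  assumes "idem (e::'m::monoid_mult)"
  shows "e * e = e" and "e * (e * y) = e * y"
  using assms unfolding idem_def by (simp_all add: mult.assoc[symmetric])

lemma mem_corner_iff:
  assumes "idem e" shows "x \<in> corner e \<longleftrightarrow> e * x * e = x"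
proof
  assume "e * x * e = x"
  then have "x = e * x * e" by simp
  then show "x \<in> corner e" unfolding corner_def by blast
qed (auto simp: corner_def mult.assoc idem_absorb assms)

lemma corner_idem_left: "idem e \<Longrightarrow> x \<in> corner e \<Longrightarrow> e * x = x"
  unfolding corner_def by (auto simp: mult.assoc idem_absorb)

lemma corner_idem_right: "idem e \<Longrightarrow> x \<in> corner e \<Longrightarrow> x * e = x"
  unfolding corner_def by (auto simp: mult.assoc idem_absorb)

lemma sandwich_in_corner: "e * m * e \<in> corner e"
  unfolding corner_def by blast

lemma corner_mult_closed:
  assumes "idem e" "x \<in> corner e" "y \<in> corner e" shows "x * y \<in> corner e"
proof -
  have "e * (x * y) * e = (e * x) * (y * e)" by (simp add: mult.assoc)
  then show ?thesis
    using assms corner_idem_left corner_idem_right mem_corner_iff by metis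
qed

lemma corner_power_closed: "idem e \<Longrightarrow> b \<in> corner e \<Longrightarrow> N \<ge> 1 \<Longrightarrow> b ^ N \<in> corner e"
proof (induction N)
  case (Suc k)
  then show ?case by (cases "k = 0") (simp_all add: corner_mult_closed)
qed simp

text \<open>The corner monoid \<open>eMe\<close> of a finite monoid is Dedekind-finite: the idempotent power
  of \<open>b\<close> is forced to be \<open>e\<close>.\<close>

lemma corner_inverse_commute:
  fixes a b :: "'m::{monoid_mult,finite}"
  assumes e: "idem e" and a: "a \<in> corner e" and b: "b \<in> corner e" and ab: "a * b = e"
  shows "b * a = e"
proof -
  obtain N where N: "N \<ge> 1" "idem (b ^ N)" using ex_idem_power[of b] by auto
  have ae: "a * e = a" using corner_idem_right[OF e a] .
  have pw: "a ^ k * e * b ^ k = e" for k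
  proof (induction k)
    case (Suc k)
    have "a ^ Suc k * e * b ^ Suc k = a ^ k * (a * e * b) * b ^ k"
      by (simp only: power_Suc2[of a] power_Suc[of b] mult.assoc)
    also have "\<dots> = a ^ k * e * b ^ k" using ab ae by simp
    finally show ?case using Suc by simp
  qed simp
  have "e = a ^ N * e * (b ^ N * b ^ N)" using pw[of N] idem_absorb(1)[OF N(2)] by simp
  also have "\<dots> = (a ^ N * e * b ^ N) * b ^ N" by (simp only: mult.assoc)
  also have "\<dots> = b ^ N" using pw corner_idem_left[OF e corner_power_closed[OF e b N(1)]] by simp
  finally have bN: "b ^ N = e" by simp
  obtain M where M: "N = Suc M" using N(1) by (cases N) auto
  then have bM: "b * b ^ M = e" using bN by simp
  have "b * a = b * (a * (b * b ^ M))" using ae bM by simp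
  also have "\<dots> = (b * e) * b ^ M" using ab by (simp only: mult.assoc[symmetric])
  also have "\<dots> = e" using corner_idem_right[OF e b] bM by simp
  finally show ?thesis .
qed

lemma mem_units_at_iff:
  "g \<in> units_at e \<longleftrightarrow> g \<in> corner e \<and> (\<exists>h\<in>corner e. g * h = e \<and> h * g = e)"
  unfolding units_at_def by blast

lemma units_at_subset_corner: "g \<in> units_at e \<Longrightarrow> g \<in> corner e"
  unfolding units_at_def by blast

lemma idem_in_units_at: "idem e \<Longrightarrow> e \<in> units_at e"
  using mem_corner_iff[of e e] unfolding mem_units_at_iff by (metis idem_absorb(1))

lemma units_at_if_idem_in_ideal:
  fixes x :: "'m::{monoid_mult,finite}"
  assumes e: "idem e" and x: "x \<in> corner e" and ex: "e \<in> ideal x"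
  shows "x \<in> units_at e"
proof -
  obtain p q where pq: "e = p * x * q" using ex unfolding mem_ideal_iff by blast
  define a where "a = e * p * e"
  define b where "b = e * q * e"
  have ac: "a \<in> corner e" and bc: "b \<in> corner e" unfolding a_def b_def by (rule sandwich_in_corner)+
  have "e = e * (p * (e * x * e) * q) * e"
    using pq e x mem_corner_iff by (metis idem_absorb(1) mult.assoc)
  also have "\<dots> = a * x * b" unfolding a_def b_def using e by (simp add: mult.assoc idem_absorb)
  finally have axb: "e = a * x * b" .
  have "(x * b) * a = e"
    using corner_inverse_commute[OF e ac corner_mult_closed[OF e x bc]] axb by (simp add: mult.assoc)
  moreover have "b * (a * x) = e"
    using corner_inverse_commute[OF e corner_mult_closed[OF e ac x] bc] axb by (simp add: mult.assoc)
  ultimately show ?thesis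
    unfolding mem_units_at_iff using x corner_mult_closed[OF e bc ac] by (metis mult.assoc)
qed

lemma idem_in_corner_eq:
  fixes x :: "'m::{monoid_mult,finite}"
  assumes e: "idem e" and x: "x \<in> corner e" and ix: "idem x" and ex: "e \<in> ideal x"
  shows "x = e"
proof -
  obtain h where h: "x * h = e"
    using units_at_if_idem_in_ideal[OF e x ex] unfolding mem_units_at_iff by blast
  have "e = x * x * h" using h idem_absorb(1)[OF ix] by simp
  also have "\<dots> = x" using h corner_idem_right[OF e x] by (simp add: mult.assoc)
  finally show ?thesis by simp
qed

lemma units_at_mult_closed:
  assumes e: "idem e" and g: "g \<in> units_at e" and g': "g' \<in> units_at e"
  shows "g * g' \<in> units_at e"
proof -
  obtain h where h: "h \<in> corner e" "g * h = e" "h * g = e" using g unfolding mem_units_at_iff by blast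
  obtain h' where h': "h' \<in> corner e" "g' * h' = e" "h' * g' = e" using g' unfolding mem_units_at_iff by blast
  have gc: "g \<in> corner e" "g' \<in> corner e" using g g' units_at_subset_corner by auto
  have "g * g' * (h' * h) = g * (g' * h') * h" by (simp add: mult.assoc)
  then have 1: "g * g' * (h' * h) = e" using h h' corner_idem_right[OF e gc(1)] by simp
  have "h' * h * (g * g') = h' * (h * g) * g'" by (simp add: mult.assoc)
  then have 2: "h' * h * (g * g') = e" using h h' corner_idem_right[OF e h'(1)] by simp
  show ?thesis
    unfolding mem_units_at_iff using 1 2 corner_mult_closed[OF e gc] corner_mult_closed[OF e h'(1) h(1)]
    by blast
qed

lemma ginv_units_at:
  assumes e: "idem e" and g: "g \<in> units_at e"
  shows "ginv e g \<in> units_at e" and "g * ginv e g = e" and "ginv e g * g = e"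
proof -
  obtain h where h: "h \<in> corner e" "g * h = e" "h * g = e" using g unfolding mem_units_at_iff by blast
  have hu: "h \<in> units_at e" using h units_at_subset_corner[OF g] unfolding mem_units_at_iff by blast
  have "ginv e g = h"
    unfolding ginv_def
  proof (rule the_equality)
    fix h' assume h': "h' \<in> units_at e \<and> g * h' = e \<and> h' * g = e"
    have "h' = h' * (g * h)"
      using corner_idem_right[OF e units_at_subset_corner] h' h by simp
    then have "h' = (h' * g) * h" by (simp add: mult.assoc)
    then show "h' = h" using h' corner_idem_left[OF e h(1)] by simp
  qed (use hu h in blast)
  then show "ginv e g \<in> units_at e" "g * ginv e g = e" "ginv e g * g = e" using hu h by simp_all
qed

lemma idem_of_right_inverse:
  fixes e :: "'m::monoid_mult"
  assumes e: "idem e" and aw: "a * w = e" and ea: "e * a = a"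
  shows "idem (w * a)" and "ideal (w * a) = ideal e" and "a * (w * a) = a"
proof -
  have "(w * a) * (w * a) = w * ((a * w) * a)" by (simp add: mult.assoc)
  then show "idem (w * a)" using aw ea unfolding idem_def by simp
  have "w * a = w * e * a" using ea by (simp add: mult.assoc)
  then have "w * a \<in> ideal e" unfolding mem_ideal_iff by blast
  moreover have "e = (a * w) * (a * w)" using aw idem_absorb(1)[OF e] by simp
  then have "e = a * (w * a) * w" by (simp add: mult.assoc)
  then have "e \<in> ideal (w * a)" unfolding mem_ideal_iff by blast
  ultimately show "ideal (w * a) = ideal e" by (rule ideal_eqI)
  show "a * (w * a) = a" using aw ea by (simp add: mult.assoc[symmetric])
qed

lemma idem_of_left_inverse:
  fixes e :: "'m::monoid_mult"
  assumes e: "idem e" and wb: "w * b = e" and be: "b * e = b"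
  shows "idem (b * w)" and "ideal (b * w) = ideal e" and "(b * w) * b = b"
proof -
  have "(b * w) * (b * w) = (b * (w * b)) * w" by (simp add: mult.assoc)
  then show "idem (b * w)" using wb be unfolding idem_def by simp
  have "b * w = b * e * w" using be by simp
  then have "b * w \<in> ideal e" unfolding mem_ideal_iff by blast
  moreover have "e = (w * b) * (w * b)" using wb idem_absorb(1)[OF e] by simp
  then have "e = w * (b * w) * b" by (simp add: mult.assoc)
  then have "e \<in> ideal (b * w)" unfolding mem_ideal_iff by blast
  ultimately show "ideal (b * w) = ideal e" by (rule ideal_eqI)
  show "(b * w) * b = b" using wb be by (simp add: mult.assoc)
qed

section \<open>Rectangular monoids\<close>

context
  assumes rect: "rectangular TYPE('m::{monoid_mult,finite})"
begin

lemma rectangularD: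
  assumes "idem (f::'m)" "idem g" "ideal f = ideal g"
  shows "idem (f * g)" and "ideal (f * g) = ideal f"
  using rect assms unfolding rectangular_def by (metis (no_types))+

lemma rectangular_idem_sandwich:
  assumes x: "idem (x::'m)" and w: "idem w" and wx: "ideal w = ideal x"
  shows "x * w * x = x"
proof -
  have xw: "idem (x * w)" "ideal (x * w) = ideal x" using rectangularD[OF x w wx[symmetric]] .
  have xwx: "idem (x * w * x)" "ideal (x * w * x) = ideal (x * w)" using rectangularD[OF xw(1) x xw(2)] .
  have "x \<in> ideal (x * w * x)" using xwx(2) xw(2) mem_ideal_self[of x] by simp
  then show ?thesis using idem_in_corner_eq[OF x sandwich_in_corner xwx(1)] by blast
qed

lemma rectangular_idem_triple:
  assumes x: "idem (x::'m)" and y: "idem y" and z: "idem z"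
    and yx: "ideal y = ideal x" and zx: "ideal z = ideal x"
  shows "x * y * z = x * z"
proof -
  have yz: "idem (y * z)" "ideal (y * z) = ideal x" using rectangularD[OF y z] yx zx by auto
  have xzx: "x * z * x = x" using rectangular_idem_sandwich[OF x z zx] .
  have zxz: "z * x * z = z" using rectangular_idem_sandwich[OF z x zx[symmetric]] .
  have "x * y * z = (x * z * x) * y * (z * x * z)" using xzx zxz by simp
  also have "\<dots> = x * z * (x * (y * z) * x) * z" by (simp add: mult.assoc)
  also have "\<dots> = (x * z * x) * z" using rectangular_idem_sandwich[OF x yz] by (simp add: mult.assoc)
  finally show ?thesis using xzx by simp
qed

lemma sandwich_unit_of_right_inverse:
  assumes e: "idem (e::'m)" and aw: "a * w = e" and ea: "e * a = a"
  shows "a * e \<in> units_at e"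
proof -
  note wa = idem_of_right_inverse[OF e aw ea]
  have "ideal ((w * a) * e) = ideal e" using rectangularD(2)[OF wa(1) e wa(2)] wa(2) by simp
  then have "e \<in> ideal (w * (a * e))" using mem_ideal_self[of e] by (simp add: mult.assoc)
  then have "e \<in> ideal (a * e)" by (rule mem_ideal_mult_leftD)
  moreover have "a * e \<in> corner e" using ea sandwich_in_corner by metis
  ultimately show ?thesis using units_at_if_idem_in_ideal[OF e] by blast
qed

lemma sandwich_unit_of_left_inverse:
  assumes e: "idem (e::'m)" and wb: "w * b = e" and be: "b * e = b"
  shows "e * b \<in> units_at e"
proof -
  note bw = idem_of_left_inverse[OF e wb be]
  have "ideal (e * (b * w)) = ideal e" using rectangularD(2)[OF e bw(1) bw(2)[symmetric]] .
  then have "e \<in> ideal ((e * b) * w)" using mem_ideal_self[of e] by (simp add: mult.assoc)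
  then have "e \<in> ideal (e * b)" by (rule mem_ideal_mult_rightD)
  moreover have "e * b \<in> corner e" using be sandwich_in_corner by (metis mult.assoc)
  ultimately show ?thesis using units_at_if_idem_in_ideal[OF e] by blast
qed

lemma units_at_sandwich_left:
  assumes e: "idem (e::'m)" and "e * m * n * e \<in> units_at e"
  shows "e * m * e \<in> units_at e"
proof -
  obtain h where "e * m * n * e * h = e" using assms(2) unfolding mem_units_at_iff by blast
  then have "(e * m) * (n * e * h) = e" by (simp add: mult.assoc)
  then show ?thesis using sandwich_unit_of_right_inverse[OF e _ idem_absorb(2)[OF e]] by blast
qed

lemma units_at_sandwich_right:
  assumes e: "idem (e::'m)" and "e * m * n * e \<in> units_at e"
  shows "e * n * e \<in> units_at e"
proof -
  obtain h where "h * (e * m * n * e) = e" using assms(2) unfolding mem_units_at_iff by blast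
  then have "(h * e * m) * (n * e) = e" by (simp add: mult.assoc)
  moreover have "(n * e) * e = n * e" using idem_absorb(1)[OF e] by (simp add: mult.assoc)
  ultimately show ?thesis using sandwich_unit_of_left_inverse[OF e] by (metis mult.assoc)
qed

lemma units_at_sandwich_mult:
  assumes e: "idem (e::'m)" and m: "e * m * e \<in> units_at e" and n: "e * n * e \<in> units_at e"
  shows "e * m * n * e = (e * m * e) * (e * n * e)"
proof -
  obtain h where h: "e * m * e * h = e" using m unfolding mem_units_at_iff by blast
  obtain h' where h': "h' * (e * n * e) = e" using n unfolding mem_units_at_iff by blast
  define a where "a = e * m"
  define b where "b = n * e"
  have aw: "a * (e * h) = e" using h unfolding a_def by (simp add: mult.assoc)
  have ea: "e * a = a" unfolding a_def using idem_absorb(2)[OF e] by simp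
  have wb: "(h' * e) * b = e" using h' unfolding b_def by (simp add: mult.assoc)
  have be: "b * e = b" unfolding b_def using idem_absorb(1)[OF e] by (simp add: mult.assoc)
  define x where "x = (e * h) * a"
  define z where "z = b * (h' * e)"
  note X = idem_of_right_inverse[OF e aw ea, folded x_def]
  note Z = idem_of_left_inverse[OF e wb be, folded z_def]
  have xez: "x * e * z = x * z" using rectangular_idem_triple[OF X(1) e Z(1)] X(2) Z(2) by simp
  have "e * m * n * e = a * b" unfolding a_def b_def by (simp add: mult.assoc)
  also have "\<dots> = (a * x) * (z * b)" using X(3) Z(3) by simp
  also have "\<dots> = a * (x * z) * b" by (simp add: mult.assoc)
  also have "\<dots> = a * (x * e * z) * b" using xez by simp
  also have "\<dots> = (a * x) * e * (z * b)" by (simp add: mult.assoc)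
  also have "\<dots> = a * e * b" using X(3) Z(3) by simp
  also have "\<dots> = (e * m * e) * (e * n * e)"
    unfolding a_def b_def using idem_absorb[OF e] by (simp add: mult.assoc)
  finally show ?thesis .
qed

lemma units_at_sandwich_idem:
  assumes e: "idem (e::'m)" and f: "idem f" and ef: "e \<in> ideal f"
  shows "e * f * e \<in> units_at e"
proof -
  obtain x y where xy: "e = x * f * y" using ef unfolding mem_ideal_iff by blast
  define e' where "e' = f * y * e * x * f"
  have "e' * e' = f * y * e * (x * f * y) * e * x * f"
    unfolding e'_def using idem_absorb[OF f] by (simp add: mult.assoc)
  then have ie': "idem e'" unfolding idem_def e'_def using xy idem_absorb[OF e] by (simp add: mult.assoc)
  have "e' = (f * y) * e * (x * f)" unfolding e'_def by (simp add: mult.assoc)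
  then have "e' \<in> ideal e" unfolding mem_ideal_iff by blast
  moreover have "e = x * e' * y"
    unfolding e'_def using xy idem_absorb[OF e] by (metis mult.assoc)
  then have "e \<in> ideal e'" unfolding mem_ideal_iff by blast
  ultimately have J: "ideal e = ideal e'" by (intro ideal_eqI)
  have "e * e' * e = e" using rectangular_idem_sandwich[OF e ie' J[symmetric]] .
  then have "(e * f) * (y * e * x * f * e) = e" unfolding e'_def by (simp add: mult.assoc)
  then show ?thesis using sandwich_unit_of_right_inverse[OF e _ idem_absorb(2)[OF e]] by blast
qed

lemma units_at_sandwich_power:
  assumes e: "idem (e::'m)" and m: "e * m * e \<in> units_at e" and k: "k \<ge> 1"
  shows "e * m ^ k * e \<in> units_at e"
  using k
proof (induction k)
  case (Suc k)
  show ?case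
  proof (cases "k = 0")
    case False
    then have IH: "e * m ^ k * e \<in> units_at e" using Suc by simp
    have "e * m ^ Suc k * e = e * m ^ k * m * e" by (simp only: power_Suc2 mult.assoc)
    also have "\<dots> = (e * m ^ k * e) * (e * m * e)" using units_at_sandwich_mult[OF e IH m] .
    finally show ?thesis using units_at_mult_closed[OF e IH m] by simp
  qed (use m in simp)
qed simp

text \<open>Since \<open>\<sigma>(m) = M m\<^sup>\<omega> M\<close>, this says \<open>\<sigma>(m) \<ge> MeM\<close> iff \<open>e m e\<close> is a unit of \<open>eMe\<close>.\<close>

lemma idem_in_omega_ideal_iff:
  assumes e: "idem (e::'m)"
  shows "e \<in> ideal (omega m) \<longleftrightarrow> e * m * e \<in> units_at e"
proof -
  obtain N where N: "N \<ge> 1" "omega m = m ^ N" "idem (omega m)" using omega_idem_power[of m] by auto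
  obtain M where M: "N = Suc M" using N(1) by (cases N) auto
  show ?thesis
  proof
    assume "e \<in> ideal (omega m)"
    then have "e * m * m ^ M * e \<in> units_at e"
      using units_at_sandwich_idem[OF e N(3)] N(2) M by (simp add: mult.assoc)
    then show "e * m * e \<in> units_at e" using units_at_sandwich_left[OF e] by blast
  next
    assume "e * m * e \<in> units_at e"
    then obtain h where "e * m ^ N * e * h = e"
      using units_at_sandwich_power[OF e _ N(1)] unfolding mem_units_at_iff by blast
    then have "e = e * omega m * (e * h)" using N(2) by (simp add: mult.assoc)
    then show "e \<in> ideal (omega m)" unfolding mem_ideal_iff by blast
  qed
qed

end

section \<open>Quotients of function spaces\<close>

definition fun_subspace :: "('k::field \<Rightarrow> 'a::ab_group_add \<Rightarrow> 'a) \<Rightarrow> ('x \<Rightarrow> 'a) set \<Rightarrow> bool" where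
  "fun_subspace sc I \<longleftrightarrow>
     (\<lambda>x. 0) \<in> I \<and> (\<forall>u\<in>I. \<forall>v\<in>I. fadd u v \<in> I) \<and> (\<forall>c. \<forall>u\<in>I. fscale sc c u \<in> I)"

lemma quot_space_fun_eq:
  "quot_space (D, fadd, fscale sc) I =
    (coset fadd I ` D, \<lambda>x y. {fadd u v | u v. u \<in> x \<and> v \<in> y},
     \<lambda>c x. {fadd (fscale sc c u) i | u i. u \<in> x \<and> i \<in> I})"
  unfolding quot_space_def by simp

context
  fixes sc :: "'k::field \<Rightarrow> 'a::ab_group_add \<Rightarrow> 'a" and I :: "('x \<Rightarrow> 'a) set"
  assumes vs: "vector_space sc" and sub: "fun_subspace sc I"
begin

interpretation vector_space sc by (rule vs)

lemma fun_subspace_zero: "(\<lambda>x. 0) \<in> I"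
  using sub unfolding fun_subspace_def by blast

lemma fun_subspace_add: "u \<in> I \<Longrightarrow> v \<in> I \<Longrightarrow> (\<lambda>x. u x + v x) \<in> I"
  using sub unfolding fun_subspace_def fadd_def by blast

lemma fun_subspace_scale: "u \<in> I \<Longrightarrow> (\<lambda>x. sc c (u x)) \<in> I"
  using sub unfolding fun_subspace_def fscale_def by blast

lemma fun_subspace_diff: "u \<in> I \<Longrightarrow> v \<in> I \<Longrightarrow> (\<lambda>x. u x - v x) \<in> I"
  using fun_subspace_add[of u "\<lambda>x. sc (-1) (v x)"] fun_subspace_scale[of v "-1"] by simp

lemma mem_coset_iff: "u \<in> coset fadd I d \<longleftrightarrow> (\<lambda>x. u x - d x) \<in> I"
proof
  assume "u \<in> coset fadd I d"
  then obtain i where "i \<in> I" "u = fadd d i" unfolding coset_def by blast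
  then show "(\<lambda>x. u x - d x) \<in> I" unfolding fadd_def by simp
next
  assume "(\<lambda>x. u x - d x) \<in> I"
  moreover have "u = fadd d (\<lambda>x. u x - d x)" unfolding fadd_def by simp
  ultimately show "u \<in> coset fadd I d" unfolding coset_def by blast
qed

lemma coset_self: "d \<in> coset fadd I d"
  unfolding mem_coset_iff using fun_subspace_zero by simp

lemma coset_eq_iff: "coset fadd I d = coset fadd I d' \<longleftrightarrow> (\<lambda>x. d x - d' x) \<in> I"
proof
  assume "coset fadd I d = coset fadd I d'"
  then show "(\<lambda>x. d x - d' x) \<in> I" using coset_self mem_coset_iff by blast
next
  assume dd: "(\<lambda>x. d x - d' x) \<in> I"
  show "coset fadd I d = coset fadd I d'"
  proof (intro Set.set_eqI)
    fix u
    have "(\<lambda>x. u x - d' x) = (\<lambda>x. (u x - d x) + (d x - d' x))"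
      and "(\<lambda>x. u x - d x) = (\<lambda>x. (u x - d' x) - (d x - d' x))" by auto
    then show "u \<in> coset fadd I d \<longleftrightarrow> u \<in> coset fadd I d'"
      unfolding mem_coset_iff using fun_subspace_add fun_subspace_diff dd by metis
  qed
qed

lemma coset_add:
  "{fadd u v | u v. u \<in> coset fadd I d \<and> v \<in> coset fadd I d'} = coset fadd I (fadd d d')"
proof (intro Set.set_eqI iffI)
  fix w assume "w \<in> {fadd u v | u v. u \<in> coset fadd I d \<and> v \<in> coset fadd I d'}"
  then obtain u v where uv: "w = fadd u v" "(\<lambda>x. u x - d x) \<in> I" "(\<lambda>x. v x - d' x) \<in> I"
    unfolding mem_coset_iff by blast
  have "(\<lambda>x. w x - fadd d d' x) = (\<lambda>x. (u x - d x) + (v x - d' x))"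
    using uv(1) unfolding fadd_def by (auto simp: algebra_simps)
  then show "w \<in> coset fadd I (fadd d d')"
    unfolding mem_coset_iff using fun_subspace_add[OF uv(2,3)] by simp
next
  fix w assume w: "w \<in> coset fadd I (fadd d d')"
  define u where "u = (\<lambda>x. w x - d' x)"
  have "(\<lambda>x. u x - d x) = (\<lambda>x. w x - fadd d d' x)" unfolding u_def fadd_def by (auto simp: algebra_simps)
  then have "u \<in> coset fadd I d" using w unfolding mem_coset_iff by simp
  moreover have "w = fadd u d'" unfolding u_def fadd_def by simp
  ultimately show "w \<in> {fadd u v | u v. u \<in> coset fadd I d \<and> v \<in> coset fadd I d'}"
    using coset_self by blast
qed

lemma coset_scale:
  "{fadd (fscale sc c u) i | u i. u \<in> coset fadd I d \<and> i \<in> I} = coset fadd I (fscale sc c d)"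
proof (intro Set.set_eqI iffI)
  fix w assume "w \<in> {fadd (fscale sc c u) i | u i. u \<in> coset fadd I d \<and> i \<in> I}"
  then obtain u i where ui: "w = fadd (fscale sc c u) i" "(\<lambda>x. u x - d x) \<in> I" "i \<in> I"
    unfolding mem_coset_iff by blast
  have "(\<lambda>x. w x - fscale sc c d x) = (\<lambda>x. sc c (u x - d x) + i x)"
    using ui(1) unfolding fadd_def fscale_def by (auto simp: scale_right_diff_distrib)
  then show "w \<in> coset fadd I (fscale sc c d)"
    unfolding mem_coset_iff using fun_subspace_add[OF fun_subspace_scale[OF ui(2)] ui(3)] by simp
next
  fix w assume "w \<in> coset fadd I (fscale sc c d)"
  moreover have "w = fadd (fscale sc c d) (\<lambda>x. w x - fscale sc c d x)" unfolding fadd_def by simp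
  ultimately show "w \<in> {fadd (fscale sc c u) i | u i. u \<in> coset fadd I d \<and> i \<in> I}"
    using coset_self unfolding mem_coset_iff by blast
qed

lemma some_coset_mem:
  assumes ID: "I \<subseteq> D" and D_add: "\<And>u v. u \<in> D \<Longrightarrow> v \<in> D \<Longrightarrow> fadd u v \<in> D" and d: "d \<in> D"
  shows "(SOME u. u \<in> coset fadd I d) \<in> D"
    and "(\<lambda>x. (SOME u. u \<in> coset fadd I d) x - d x) \<in> I"
proof -
  define u where "u = (SOME u. u \<in> coset fadd I d)"
  have "u \<in> coset fadd I d" unfolding u_def by (rule someI[where x = d]) (rule coset_self)
  then have ud: "(\<lambda>x. u x - d x) \<in> I" unfolding mem_coset_iff .
  have "u = fadd d (\<lambda>x. u x - d x)" unfolding fadd_def by simp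
  moreover have "fadd d (\<lambda>x. u x - d x) \<in> D" using D_add[OF d] ud ID by blast
  ultimately show "(SOME u. u \<in> coset fadd I d) \<in> D" "(\<lambda>x. (SOME u. u \<in> coset fadd I d) x - d x) \<in> I"
    using ud unfolding u_def by simp_all
qed

lemma lin_iso_quot_spaceI:
  fixes D :: "('x \<Rightarrow> 'a) set" and L :: "('x \<Rightarrow> 'a) \<Rightarrow> 'c"
  assumes ID: "I \<subseteq> D"
    and D_add: "\<And>u v. u \<in> D \<Longrightarrow> v \<in> D \<Longrightarrow> fadd u v \<in> D"
    and D_scale: "\<And>c u. u \<in> D \<Longrightarrow> fscale sc c u \<in> D"
    and L_surj: "L ` D = C"
    and L_add: "\<And>u v. u \<in> D \<Longrightarrow> v \<in> D \<Longrightarrow> L (fadd u v) = addC (L u) (L v)"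
    and L_scale: "\<And>c u. u \<in> D \<Longrightarrow> L (fscale sc c u) = scaleC c (L u)"
    and L_eq_iff: "\<And>u v. u \<in> D \<Longrightarrow> v \<in> D \<Longrightarrow> L u = L v \<longleftrightarrow> (\<lambda>x. u x - v x) \<in> I"
  shows "lin_iso (quot_space (D, fadd, fscale sc) I) (C, addC, scaleC)"
proof -
  define \<Phi> where "\<Phi> = (\<lambda>x. L (SOME u. u \<in> x))"
  have \<Phi>_coset: "\<Phi> (coset fadd I d) = L d" if "d \<in> D" for d
    using L_eq_iff[OF _ that] some_coset_mem[OF ID D_add that] unfolding \<Phi>_def by simp
  have "bij_betw \<Phi> (coset fadd I ` D) C"
  proof (rule bij_betw_imageI)
    show "inj_on \<Phi> (coset fadd I ` D)"
    proof (rule inj_onI)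
      fix x y assume "x \<in> coset fadd I ` D" "y \<in> coset fadd I ` D" "\<Phi> x = \<Phi> y"
      then obtain d d' where "d \<in> D" "d' \<in> D" "x = coset fadd I d" "y = coset fadd I d'"
        and "L d = L d'" using \<Phi>_coset by auto
      then show "x = y" using L_eq_iff coset_eq_iff by simp
    qed
    show "\<Phi> ` coset fadd I ` D = C"
      using L_surj \<Phi>_coset by (auto simp: image_image image_def)
  qed
  moreover have "\<Phi> {fadd u v | u v. u \<in> x \<and> v \<in> y} = addC (\<Phi> x) (\<Phi> y)"
    if "x \<in> coset fadd I ` D" "y \<in> coset fadd I ` D" for x y
    using that coset_add \<Phi>_coset L_add D_add by auto
  moreover have "\<Phi> {fadd (fscale sc c u) i | u i. u \<in> x \<and> i \<in> I} = scaleC c (\<Phi> x)"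
    if "x \<in> coset fadd I ` D" for x c
    using that coset_scale \<Phi>_coset L_scale D_scale by auto
  ultimately show ?thesis unfolding lin_iso_def quot_space_fun_eq by auto
qed

end

section \<open>Derivations of the group of units\<close>

locale unit_group_bimodule =
  fixes scale :: "'k::field \<Rightarrow> 'a::ab_group_add \<Rightarrow> 'a"
    and lact :: "'m::monoid_mult \<Rightarrow> 'a \<Rightarrow> 'a"
    and ract :: "'a \<Rightarrow> 'm \<Rightarrow> 'a"
    and e :: 'm
  assumes idem_e: "idem e"
    and module: "GGop_module scale lact ract (units_at e) e"
begin

sublocale vector_space scale
  using module unfolding GGop_module_def by blast

abbreviation G where "G \<equiv> units_at e"

lemma lact_add: "g \<in> G \<Longrightarrow> lact g (a + b) = lact g a + lact g b"
  and ract_add: "g \<in> G \<Longrightarrow> ract (a + b) g = ract a g + ract b g"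
  and lact_scale: "g \<in> G \<Longrightarrow> lact g (scale c a) = scale c (lact g a)"
  and ract_scale: "g \<in> G \<Longrightarrow> ract (scale c a) g = scale c (ract a g)"
  and lact_unit: "lact e a = a"
  and ract_unit: "ract a e = a"
  and lact_lact: "g \<in> G \<Longrightarrow> h \<in> G \<Longrightarrow> lact g (lact h a) = lact (g * h) a"
  and ract_ract: "g \<in> G \<Longrightarrow> h \<in> G \<Longrightarrow> ract (ract a g) h = ract a (g * h)"
  and lact_ract_commute: "g \<in> G \<Longrightarrow> h \<in> G \<Longrightarrow> lact g (ract a h) = ract (lact g a) h"
  using module unfolding GGop_module_def by blast+

lemma lact_zero: "g \<in> G \<Longrightarrow> lact g 0 = 0"
  using lact_add[of g 0 0] by simp

lemma ract_zero: "g \<in> G \<Longrightarrow> ract 0 g = 0"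
  using ract_add[of g 0 0] by simp

lemma lact_diff: "g \<in> G \<Longrightarrow> lact g (a - b) = lact g a - lact g b"
  using lact_add[of g "a - b" b] by (simp add: eq_diff_eq)

lemma ract_diff: "g \<in> G \<Longrightarrow> ract (a - b) g = ract a g - ract b g"
  using ract_add[of g "a - b" b] by (simp add: eq_diff_eq)

lemma lact_sum: "g \<in> G \<Longrightarrow> lact g (sum f A) = (\<Sum>x\<in>A. lact g (f x))"
  by (induction A rule: infinite_finite_induct) (simp_all add: lact_zero lact_add)

lemma ract_sum: "g \<in> G \<Longrightarrow> ract (sum f A) g = (\<Sum>x\<in>A. ract (f x) g)"
  by (induction A rule: infinite_finite_induct) (simp_all add: ract_zero ract_add)

lemma idem_in_G: "e \<in> G"
  using idem_in_units_at[OF idem_e] .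

lemma G_mult_closed: "g \<in> G \<Longrightarrow> h \<in> G \<Longrightarrow> g * h \<in> G"
  using units_at_mult_closed[OF idem_e] .

lemma ginv_in_G: "g \<in> G \<Longrightarrow> ginv e g \<in> G"
  and G_mult_ginv: "g \<in> G \<Longrightarrow> g * ginv e g = e"
  and ginv_mult_G: "g \<in> G \<Longrightarrow> ginv e g * g = e"
  using ginv_units_at[OF idem_e] by blast+

lemma G_idem_left: "g \<in> G \<Longrightarrow> e * g = g"
  and G_idem_right: "g \<in> G \<Longrightarrow> g * e = g"
  using corner_idem_left[OF idem_e] corner_idem_right[OF idem_e] units_at_subset_corner by blast+

lemma ginv_mult_distrib:
  assumes g: "g \<in> G" and h: "h \<in> G"
  shows "ginv e (g * h) = ginv e h * ginv e g"
proof -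
  define k where "k = ginv e h * ginv e g"
  have gh: "g * h \<in> G" using G_mult_closed[OF g h] .
  have "k * (g * h) = ginv e h * (ginv e g * g) * h" unfolding k_def by (simp add: mult.assoc)
  then have kgh: "k * (g * h) = e" using ginv_mult_G g h G_idem_right ginv_in_G by simp
  have "ginv e (g * h) = (k * (g * h)) * ginv e (g * h)" using kgh G_idem_left[OF ginv_in_G[OF gh]] by simp
  also have "\<dots> = k * e" using G_mult_ginv[OF gh] by (simp only: mult.assoc)
  also have "\<dots> = k" unfolding k_def using G_idem_right G_mult_closed ginv_in_G g h by simp
  finally show ?thesis unfolding k_def .
qed

lemma bij_betw_G_mult_left: "g \<in> G \<Longrightarrow> bij_betw (\<lambda>h. g * h) G G"
  by (rule bij_betw_byWitness[where f' = "\<lambda>k. ginv e g * k"])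
    (auto simp: mult.assoc[symmetric] G_mult_ginv ginv_mult_G G_idem_left G_mult_closed ginv_in_G)

abbreviation DerG where "DerG \<equiv> Der_G G lact ract"

abbreviation InnG where "InnG \<equiv> Inn_G G lact ract"

lemma Der_GD: "D \<in> DerG \<Longrightarrow> g \<in> G \<Longrightarrow> h \<in> G \<Longrightarrow> D (g * h) = lact g (D h) + ract (D g) h"
  and Der_G_outside: "D \<in> DerG \<Longrightarrow> g \<notin> G \<Longrightarrow> D g = 0"
  unfolding Der_G_def by blast+

lemma zero_in_Der_G: "(\<lambda>_. 0) \<in> DerG"
  unfolding Der_G_def using lact_zero ract_zero by auto

lemma fun_subspace_Inn_G: "fun_subspace scale InnG"
  unfolding fun_subspace_def
proof (intro conjI ballI allI)
  show "(\<lambda>x. 0) \<in> InnG" unfolding Inn_G_def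
    by (rule CollectI, rule exI[of _ 0]) (auto simp: lact_zero ract_zero)
next
  fix u v assume "u \<in> InnG" "v \<in> InnG"
  then obtain a b where "u = (\<lambda>g. if g \<in> G then lact g a - ract a g else 0)"
    "v = (\<lambda>g. if g \<in> G then lact g b - ract b g else 0)"
    unfolding Inn_G_def by blast
  then have "fadd u v = (\<lambda>g. if g \<in> G then lact g (a + b) - ract (a + b) g else 0)"
    unfolding fadd_def by (auto simp: lact_add ract_add algebra_simps)
  then show "fadd u v \<in> InnG" unfolding Inn_G_def by blast
next
  fix c u assume "u \<in> InnG"
  then obtain a where "u = (\<lambda>g. if g \<in> G then lact g a - ract a g else 0)" unfolding Inn_G_def by blast
  then have "fscale scale c u = (\<lambda>g. if g \<in> G then lact g (scale c a) - ract (scale c a) g else 0)"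
    unfolding fscale_def by (auto simp: lact_scale ract_scale scale_right_diff_distrib)
  then show "fscale scale c u \<in> InnG" unfolding Inn_G_def by blast
qed

lemma Der_G_twisted_mult:
  assumes D: "D \<in> DerG" and g: "g \<in> G" and h: "h \<in> G"
  shows "ract (D (g * h)) (ginv e (g * h)) =
         lact g (ract (ract (D h) (ginv e h)) (ginv e g)) + ract (D g) (ginv e g)"
proof -
  have gi: "ginv e g \<in> G" and hi: "ginv e h \<in> G" using ginv_in_G g h by auto
  have "ract (D (g * h)) (ginv e (g * h))
      = ract (ract (lact g (D h)) (ginv e h)) (ginv e g) + ract (D g) (h * (ginv e h * ginv e g))"
    using Der_GD[OF D g h] ginv_mult_distrib[OF g h] G_mult_closed[OF hi gi]
    by (simp add: ract_add ract_ract hi gi h)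
  also have "h * (ginv e h * ginv e g) = ginv e g"
    using G_mult_ginv[OF h] G_idem_left[OF gi] by (simp add: mult.assoc[symmetric])
  finally show ?thesis using lact_ract_commute[OF g hi] lact_ract_commute[OF g gi] by simp
qed

lemma Der_G_average:
  assumes D: "D \<in> DerG" and g: "g \<in> G"
  defines "c \<equiv> \<Sum>h\<in>G. ract (D h) (ginv e h)"
  shows "scale (of_nat (card G)) (D g) = ract c g - lact g c"
proof -
  have gi: "ginv e g \<in> G" using ginv_in_G[OF g] .
  have "c = (\<Sum>h\<in>G. ract (D (g * h)) (ginv e (g * h)))"
    unfolding c_def
    using sum.reindex_bij_betw[OF bij_betw_G_mult_left[OF g], of "\<lambda>k. ract (D k) (ginv e k)"] by simp
  also have "\<dots> = (\<Sum>h\<in>G. lact g (ract (ract (D h) (ginv e h)) (ginv e g)) + ract (D g) (ginv e g))"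
    using Der_G_twisted_mult[OF D g] by simp
  also have "\<dots> = lact g (ract c (ginv e g)) + scale (of_nat (card G)) (ract (D g) (ginv e g))"
    unfolding c_def sum.distrib lact_sum[OF g] ract_sum[OF gi] sum_constant_scale ..
  finally have "ract c g = ract (lact g (ract c (ginv e g))) g
      + ract (scale (of_nat (card G)) (ract (D g) (ginv e g))) g"
    using ract_add[OF g] by metis
  also have "\<dots> = lact g c + scale (of_nat (card G)) (D g)"
    using lact_ract_commute[OF g g, of "ract c (ginv e g)", symmetric] ract_ract[OF gi g]
      ginv_mult_G[OF g] ract_unit ract_scale[OF g] by simp
  finally show ?thesis by simp
qed

text \<open>Note that \<open>card G \<noteq> 0\<close> already forces \<open>G\<close> to be finite.\<close>

lemma Der_G_subset_Inn_G:
  assumes N: "of_nat (card G) \<noteq> (0::'k)"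
  shows "DerG \<subseteq> InnG"
proof
  fix D assume D: "D \<in> DerG"
  define c where "c = (\<Sum>h\<in>G. ract (D h) (ginv e h))"
  define a where "a = scale (- inverse (of_nat (card G))) c"
  have "D g = (if g \<in> G then lact g a - ract a g else 0)" for g
  proof (cases "g \<in> G")
    case True
    have "lact g a = scale (- inverse (of_nat (card G))) (lact g c)"
      and "ract a g = scale (- inverse (of_nat (card G))) (ract c g)"
      unfolding a_def by (rule lact_scale[OF True], rule ract_scale[OF True])
    then have "lact g a - ract a g = scale (inverse (of_nat (card G))) (ract c g - lact g c)"
      by (simp add: scale_right_diff_distrib)
    also have "\<dots> = D g"
      using Der_G_average[OF D True, folded c_def, symmetric] N by simp
    finally show ?thesis using True by simp
  qed (simp add: Der_G_outside[OF D])
  then show "D \<in> InnG" unfolding Inn_G_def by blast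
qed

end

section \<open>Derivations of a rectangular monoid\<close>

locale rect_bimodule = unit_group_bimodule scale lact ract e
  for scale :: "'k::field \<Rightarrow> 'a::ab_group_add \<Rightarrow> 'a"
    and lact :: "'m::{monoid_mult,finite} \<Rightarrow> 'a \<Rightarrow> 'a"
    and ract and e +
  fixes X :: "'m set"
  assumes rect: "rectangular TYPE('m)" and ideal_e: "ideal e = X"
begin

lemma sigma_ge_iff: "X \<subseteq> sigma m \<longleftrightarrow> e * m * e \<in> G"
  unfolding sigma_def ideal_e[symmetric] ideal_subset_iff
  using idem_in_omega_ideal_iff[OF rect idem_e] .

lemma sandwich_mult:
  "e * m * e \<in> G \<Longrightarrow> e * n * e \<in> G \<Longrightarrow> e * (m * n) * e = (e * m * e) * (e * n * e)"
  using units_at_sandwich_mult[OF rect idem_e] by (simp add: mult.assoc)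

lemma sandwich_mult_in_G_iff: "e * (m * n) * e \<in> G \<longleftrightarrow> e * m * e \<in> G \<and> e * n * e \<in> G"
proof
  assume "e * (m * n) * e \<in> G"
  then have "e * m * n * e \<in> G" by (simp add: mult.assoc)
  then show "e * m * e \<in> G \<and> e * n * e \<in> G"
    using units_at_sandwich_left[OF rect idem_e] units_at_sandwich_right[OF rect idem_e] by blast
qed (simp add: sandwich_mult G_mult_closed)

abbreviation lrho :: "'m \<Rightarrow> 'a \<Rightarrow> 'a" where "lrho \<equiv> rho_left X e lact"

abbreviation rrho :: "'a \<Rightarrow> 'm \<Rightarrow> 'a" where "rrho \<equiv> rho_right X e ract"

lemma lrho_eq: "lrho m a = (if e * m * e \<in> G then lact (e * m * e) a else 0)"
  unfolding rho_left_def sigma_ge_iff ..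

lemma rrho_eq: "rrho a m = (if e * m * e \<in> G then ract a (e * m * e) else 0)"
  unfolding rho_right_def sigma_ge_iff ..

lemma lrho_zero: "lrho m 0 = 0"
  and rrho_zero: "rrho 0 m = 0"
  and lrho_add: "lrho m (a + b) = lrho m a + lrho m b"
  and rrho_add: "rrho (a + b) m = rrho a m + rrho b m"
  and lrho_diff: "lrho m (a - b) = lrho m a - lrho m b"
  and rrho_diff: "rrho (a - b) m = rrho a m - rrho b m"
  and lrho_scale: "lrho m (scale c a) = scale c (lrho m a)"
  and rrho_scale: "rrho (scale c a) m = scale c (rrho a m)"
  and lrho_rrho_commute: "lrho m (rrho a n) = rrho (lrho m a) n"
  unfolding lrho_eq rrho_eq
  by (simp_all add: lact_zero ract_zero lact_add ract_add lact_diff ract_diff lact_scale ract_scale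
      lact_ract_commute)

lemma lrho_idem: "lrho e a = a"
  and rrho_idem: "rrho a e = a"
  unfolding lrho_eq rrho_eq using idem_absorb(1)[OF idem_e] idem_in_G lact_unit ract_unit by simp_all

text \<open>Rectangularity is exactly what makes \<open>\<rho>\<^sub>X\<close> multiplicative.\<close>

lemma lrho_mult: "lrho (m * n) a = lrho m (lrho n a)"
  unfolding lrho_eq using sandwich_mult_in_G_iff sandwich_mult lact_lact lact_zero by auto

lemma rrho_mult: "rrho a (m * n) = rrho (rrho a m) n"
  unfolding rrho_eq using sandwich_mult_in_G_iff sandwich_mult ract_ract ract_zero by auto

lemma rrho_idem_mult: "rrho a (e * n) = rrho a n"
  using rrho_mult[of a e n] rrho_idem by simp

abbreviation DerM where "DerM \<equiv> Der_M X e lact ract"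

abbreviation InnM where "InnM \<equiv> Inn_M X e lact ract"

lemma Der_MD: "d \<in> DerM \<Longrightarrow> d (m * n) = lrho m (d n) + rrho (d m) n"
  unfolding Der_M_def by blast

lemma Der_M_idem: assumes d: "d \<in> DerM" shows "d e = 0"
proof -
  have "d e = d e + d e"
    using Der_MD[OF d, of e e] idem_absorb(1)[OF idem_e] lrho_idem rrho_idem by simp
  then show ?thesis by simp
qed

lemma Der_M_idem_mult: assumes d: "d \<in> DerM" shows "d (e * m) = d m"
  using Der_MD[OF d, of e m] Der_M_idem[OF d] lrho_idem rrho_zero by simp

lemma Der_M_mult_idem: assumes d: "d \<in> DerM" shows "d (m * e) = d m"
  using Der_MD[OF d, of m e] Der_M_idem[OF d] rrho_idem lrho_zero by simp

lemma Der_M_sandwich: "d \<in> DerM \<Longrightarrow> d (e * m * e) = d m"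
  using Der_M_idem_mult[of d m] Der_M_mult_idem[of d "e * m"] by simp

lemma Der_M_insert_idem: assumes d: "d \<in> DerM" shows "d (m * e * n) = d (m * n)"
  using Der_MD[OF d, of m "e * n"] Der_MD[OF d, of m n] Der_M_idem_mult[OF d] rrho_idem_mult
  by (simp add: mult.assoc)

lemma Der_M_fadd: "d \<in> DerM \<Longrightarrow> d' \<in> DerM \<Longrightarrow> fadd d d' \<in> DerM"
  unfolding Der_M_def fadd_def by (auto simp: lrho_add rrho_add algebra_simps)

lemma Der_M_fscale: "d \<in> DerM \<Longrightarrow> fscale scale c d \<in> DerM"
  unfolding Der_M_def fscale_def by (auto simp: lrho_scale rrho_scale scale_right_distrib)

lemma Der_M_diff: "d \<in> DerM \<Longrightarrow> d' \<in> DerM \<Longrightarrow> (\<lambda>x. d x - d' x) \<in> DerM"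
  unfolding Der_M_def by (auto simp: lrho_diff rrho_diff algebra_simps)

lemma Inn_M_subset_Der_M: "InnM \<subseteq> DerM"
  unfolding Inn_M_def Der_M_def
  by (auto simp: lrho_mult rrho_mult lrho_diff rrho_diff lrho_rrho_commute algebra_simps)

lemma fun_subspace_Inn_M: "fun_subspace scale InnM"
  unfolding fun_subspace_def
proof (intro conjI ballI allI)
  show "(\<lambda>x. 0) \<in> InnM" unfolding Inn_M_def
    by (rule CollectI, rule exI[of _ 0]) (simp add: lrho_zero rrho_zero)
next
  fix u v assume "u \<in> InnM" "v \<in> InnM"
  then obtain a b where "u = (\<lambda>m. lrho m a - rrho a m)" "v = (\<lambda>m. lrho m b - rrho b m)"
    unfolding Inn_M_def by blast
  then have "fadd u v = (\<lambda>m. lrho m (a + b) - rrho (a + b) m)"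
    unfolding fadd_def by (auto simp: lrho_add rrho_add algebra_simps)
  then show "fadd u v \<in> InnM" unfolding Inn_M_def by blast
next
  fix c u assume "u \<in> InnM"
  then obtain a where "u = (\<lambda>m. lrho m a - rrho a m)" unfolding Inn_M_def by blast
  then have "fscale scale c u = (\<lambda>m. lrho m (scale c a) - rrho (scale c a) m)"
    unfolding fscale_def by (auto simp: lrho_scale rrho_scale scale_right_diff_distrib)
  then show "fscale scale c u \<in> InnM" unfolding Inn_M_def by blast
qed

abbreviation IX where "IX \<equiv> I_X e"

lemma mem_I_X_iff: "x \<in> IX \<longleftrightarrow> x \<in> corner e \<and> x \<notin> G"
  unfolding I_X_def by blast

lemma I_X_idem_left: "x \<in> IX \<Longrightarrow> e * x = x"
  and I_X_idem_right: "x \<in> IX \<Longrightarrow> x * e = x"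
  using corner_idem_left[OF idem_e] corner_idem_right[OF idem_e] mem_I_X_iff by blast+

lemma I_X_sandwich: "x \<in> IX \<Longrightarrow> e * x * e = x"
  using I_X_idem_left I_X_idem_right by simp

lemma sandwich_in_I_X: "e * m * e \<notin> G \<Longrightarrow> e * m * e \<in> IX"
  using mem_I_X_iff sandwich_in_corner by blast

lemma nabla_sandwich_notin_G: assumes "m \<in> nabla X" shows "e * m * e \<notin> G"
proof
  assume "e * m * e \<in> G"
  then obtain h where "e * m * e * h = e" unfolding mem_units_at_iff by blast
  then have "e = e * m * (e * h)" by (simp add: mult.assoc)
  then have "X \<subseteq> ideal m" using ideal_e ideal_subset_iff mem_ideal_iff by blast
  then show False using assms unfolding nabla_def by blast
qed

lemma I_X_subset_nabla: "IX \<subseteq> nabla X"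
proof
  fix x assume x: "x \<in> IX"
  have "\<not> X \<subseteq> ideal x"
  proof
    assume "X \<subseteq> ideal x"
    then have "e \<in> ideal x" using ideal_e mem_ideal_self by blast
    then show False using units_at_if_idem_in_ideal[OF idem_e] x mem_I_X_iff by blast
  qed
  then show "x \<in> nabla X" unfolding nabla_def by blast
qed

lemma I_X_mult_closed: assumes x: "x \<in> IX" and y: "y \<in> IX" shows "x * y \<in> IX"
proof -
  have "x * y \<in> corner e" using corner_mult_closed[OF idem_e] x y mem_I_X_iff by blast
  moreover have "e * (x * y) * e \<notin> G"
    using sandwich_mult_in_G_iff I_X_sandwich[OF x] x mem_I_X_iff by simp
  ultimately show ?thesis using sandwich_in_I_X mem_corner_iff[OF idem_e] by metis
qed

lemma I_X_mult_in_Zset: "x \<in> IX \<Longrightarrow> y \<in> IX \<Longrightarrow> x * y \<in> Zset X e"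
  unfolding Zset_def using I_X_mult_closed I_X_subset_nabla by blast

lemma Zset_subset_I_X: "Zset X e \<subseteq> IX"
  unfolding Zset_def by blast

lemma ginv_translate_cancel:
  assumes "g \<in> G" "h \<in> G" "x \<in> IX"
  shows "ginv e g * (g * x * h) * ginv e h = x"
    and "g * (ginv e g * x * ginv e h) * h = x"
proof -
  have "ginv e g * (g * x * h) * ginv e h = (ginv e g * g) * x * (h * ginv e h)"
    and "g * (ginv e g * x * ginv e h) * h = (g * ginv e g) * x * (ginv e h * h)"
    by (simp_all add: mult.assoc)
  then show "ginv e g * (g * x * h) * ginv e h = x" "g * (ginv e g * x * ginv e h) * h = x"
    using assms ginv_mult_G G_mult_ginv I_X_idem_left I_X_idem_right by (simp_all add: mult.assoc)
qed

lemma translate_in_I_X: assumes g: "g \<in> G" and h: "h \<in> G" and x: "x \<in> IX" shows "g * x * h \<in> IX"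
proof -
  have c: "g * x * h \<in> corner e"
    using corner_mult_closed[OF idem_e] units_at_subset_corner g h x mem_I_X_iff by metis
  have "g * x * h \<notin> G"
  proof
    assume "g * x * h \<in> G"
    then have "ginv e g * (g * x * h) * ginv e h \<in> G" using G_mult_closed ginv_in_G g h by blast
    then show False using ginv_translate_cancel(1)[OF g h x] x mem_I_X_iff by simp
  qed
  then show ?thesis using c mem_I_X_iff by blast
qed

lemma bij_betw_I_X_translate:
  assumes g: "g \<in> G" and h: "h \<in> G"
  shows "bij_betw (\<lambda>x. g * x * h) IX IX"
  by (rule bij_betw_byWitness[where f' = "\<lambda>y. ginv e g * y * ginv e h"])
    (use ginv_translate_cancel[OF g h] translate_in_I_X g h ginv_in_G in auto)

lemma Der_M_Zset: assumes d: "d \<in> DerM" and z: "z \<in> Zset X e" shows "d z = 0"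
proof -
  obtain a b where "z = a * b" "a \<in> nabla X" "b \<in> nabla X" using z unfolding Zset_def by blast
  then show ?thesis using Der_MD[OF d] nabla_sandwich_notin_G unfolding lrho_eq rrho_eq by simp
qed

lemma Der_M_gen_rel: assumes d: "d \<in> DerM" and xy: "(x, y) \<in> gen_rel X e" shows "d x = d y"
  using xy unfolding gen_rel_def
proof (elim IntE UnE)
  assume "(x, y) \<in> {(e * m * n * e, e * m * e * n * e) | m n. \<not> X \<subseteq> sigma (m * n)}"
  then obtain m n where "x = e * (m * n) * e" "y = e * (m * e * n) * e" by (auto simp: mult.assoc)
  then show ?thesis using Der_M_sandwich[OF d] Der_M_insert_idem[OF d] by simp
qed (use Der_M_Zset[OF d] in auto)

lemma Der_M_simX: assumes d: "d \<in> DerM" and xy: "(x, y) \<in> simX X e" shows "d x = d y"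
proof -
  let ?R = "gen_rel X e \<union> (gen_rel X e)\<inverse>"
  have step: "d a = d b" if "(a, b) \<in> ?R" for a b
    using that Der_M_gen_rel[OF d] by fastforce
  have "d x = d y" if "(x, y) \<in> ?R\<^sup>+"
    using that by (induction rule: trancl_induct) (use step in auto)
  then show ?thesis using xy unfolding simX_def by auto
qed

lemma Der_M_translate:
  assumes d: "d \<in> DerM" and g: "g \<in> G" and h: "h \<in> G" and x: "x \<in> IX"
  shows "d (g * x * h) = lact g (ract (d x) h)"
proof -
  have xh: "x * h \<in> IX" using translate_in_I_X[OF idem_in_G h x] I_X_idem_left[OF x] by simp
  have ege: "e * g * e = g" and ehe: "e * h * e = h" using G_idem_left G_idem_right g h by simp_all
  have "d (x * h) = ract (d x) h"
    using Der_MD[OF d, of x h] I_X_sandwich[OF x] x ehe h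
    unfolding lrho_eq rrho_eq mem_I_X_iff by simp
  then show ?thesis
    using Der_MD[OF d, of g "x * h"] I_X_sandwich[OF xh] xh ege g
    unfolding lrho_eq rrho_eq mem_I_X_iff by (simp add: mult.assoc)
qed

lemma mem_kI_iff: "v \<in> kI e \<longleftrightarrow> (\<forall>y. y \<notin> IX \<longrightarrow> v y = 0)"
  unfolding kI_def by blast

lemma delta_in_kI: "x \<in> IX \<Longrightarrow> (delta x :: 'm \<Rightarrow> 'k) \<in> kI e"
  unfolding mem_kI_iff delta_def by auto

lemma gact_in_kI: "gact e g h (v :: 'm \<Rightarrow> 'k) \<in> kI e"
  unfolding gact_def mem_kI_iff by simp

lemma simX_subset_I_X: "(a, b) \<in> simX X e \<Longrightarrow> a \<in> IX \<and> b \<in> IX"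
  unfolding simX_def gen_rel_def by (auto dest: tranclD tranclD2)

lemma W_gens_subset_kI: "(W_gens X e :: ('m \<Rightarrow> 'k) set) \<subseteq> kI e"
  using Zset_subset_I_X simX_subset_I_X unfolding W_gens_def delta_def by (auto simp: mem_kI_iff)

lemma W_X_subset_kI: "(W_X X e :: ('m \<Rightarrow> 'k) set) \<subseteq> kI e"
  unfolding W_X_def using W_gens_subset_kI by (auto simp: mem_kI_iff subset_iff intro!: sum.neutral)

definition hom_of_der :: "('m \<Rightarrow> 'a) \<Rightarrow> ('m \<Rightarrow> 'k) \<Rightarrow> 'a" where
  "hom_of_der d v = (if v \<in> kI e then \<Sum>x\<in>IX. scale (v x) (d x) else 0)"

lemma sum_delta_scale: "x \<in> IX \<Longrightarrow> (\<Sum>y\<in>IX. scale (delta x y :: 'k) (f y)) = f x"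
  unfolding delta_def by (simp add: if_distrib[of "\<lambda>c. scale c _"] cong: if_cong)

lemma hom_of_der_delta: "x \<in> IX \<Longrightarrow> hom_of_der d (delta x) = d x"
  unfolding hom_of_der_def using delta_in_kI sum_delta_scale by simp

lemma hom_of_der_fadd: "hom_of_der (fadd d d') = fadd (hom_of_der d) (hom_of_der d')"
  unfolding hom_of_der_def fadd_def by (auto simp: scale_right_distrib sum.distrib)

lemma hom_of_der_fscale: "hom_of_der (fscale scale c d) = fscale scale c (hom_of_der d)"
  unfolding hom_of_der_def fscale_def by (intro ext) (simp add: scale_sum_right mult.commute)

lemma hom_of_der_W_gens:
  assumes d: "d \<in> DerM" and w: "w \<in> W_gens X e"
  shows "hom_of_der d w = 0"
  using w unfolding W_gens_def
proof (elim UnE CollectE exE conjE)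
  fix z assume "w = delta z" "z \<in> Zset X e"
  then show ?thesis using hom_of_der_delta Zset_subset_I_X Der_M_Zset[OF d] by auto
next
  fix a b assume w: "w = (\<lambda>y. delta a y - delta b y)" and ab: "(a, b) \<in> simX X e"
  have "hom_of_der d w = (\<Sum>x\<in>IX. scale (delta a x) (d x)) - (\<Sum>x\<in>IX. scale (delta b x) (d x))"
    unfolding hom_of_der_def using w W_gens_subset_kI \<open>w \<in> W_gens X e\<close>
    by (auto simp: scale_left_diff_distrib sum_subtractf)
  then show ?thesis using sum_delta_scale simX_subset_I_X[OF ab] Der_M_simX[OF d ab] by simp
qed

lemma hom_of_der_W_X:
  assumes d: "d \<in> DerM" and w: "w \<in> W_X X e"
  shows "hom_of_der d w = 0"
proof -
  obtain t r where tr: "w = (\<lambda>y. \<Sum>w\<in>t. r w * w y)" "t \<subseteq> W_gens X e"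
    using w unfolding W_X_def by blast
  have "hom_of_der d w = (\<Sum>x\<in>IX. \<Sum>w'\<in>t. scale (r w') (scale (w' x) (d x)))"
    unfolding hom_of_der_def using W_X_subset_kI w tr(1) by (auto simp: scale_sum_left)
  also have "\<dots> = (\<Sum>w'\<in>t. scale (r w') (hom_of_der d w'))"
    unfolding hom_of_der_def using tr(2) W_gens_subset_kI
    by (subst sum.swap) (auto simp: scale_sum_right intro!: sum.cong)
  also have "\<dots> = 0" using hom_of_der_W_gens[OF d] tr(2) by (auto intro!: sum.neutral)
  finally show ?thesis .
qed

lemma hom_of_der_gact:
  assumes d: "d \<in> DerM" and g: "g \<in> G" and h: "h \<in> G" and v: "v \<in> kI e"
  shows "hom_of_der d (gact e g h v) = lact g (ract (hom_of_der d v) h)"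
proof -
  define F where "F = (\<lambda>y. scale (v (ginv e g * y * ginv e h)) (d y))"
  have "hom_of_der d (gact e g h v) = (\<Sum>y\<in>IX. F y)"
    unfolding hom_of_der_def F_def using gact_in_kI by (simp add: gact_def)
  also have "\<dots> = (\<Sum>x\<in>IX. F (g * x * h))"
    by (rule sum.reindex_bij_betw[symmetric]) (rule bij_betw_I_X_translate[OF g h])
  also have "\<dots> = (\<Sum>x\<in>IX. lact g (ract (scale (v x) (d x)) h))"
    unfolding F_def using ginv_translate_cancel(1)[OF g h] Der_M_translate[OF d g h]
      ract_scale[OF h] lact_scale[OF g] by simp
  also have "\<dots> = lact g (ract (\<Sum>x\<in>IX. scale (v x) (d x)) h)"
    by (simp only: lact_sum[OF g] ract_sum[OF h])
  also have "\<dots> = lact g (ract (hom_of_der d v) h)"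
    unfolding hom_of_der_def using v by simp
  finally show ?thesis .
qed

abbreviation HV where "HV \<equiv> HomV scale X e lact ract"

lemma hom_of_der_in_HomV: assumes d: "d \<in> DerM" shows "hom_of_der d \<in> HV"
  unfolding HomV_def
proof (intro CollectI conjI allI ballI impI)
  fix u v :: "'m \<Rightarrow> 'k" assume "u \<in> kI e" "v \<in> kI e"
  then show "hom_of_der d (\<lambda>y. u y + v y) = hom_of_der d u + hom_of_der d v"
    unfolding hom_of_der_def mem_kI_iff by (simp add: scale_left_distrib sum.distrib)
next
  fix c :: 'k and v :: "'m \<Rightarrow> 'k" assume "v \<in> kI e"
  then show "hom_of_der d (\<lambda>y. c * v y) = scale c (hom_of_der d v)"
    unfolding hom_of_der_def mem_kI_iff by (simp add: scale_sum_right)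
next
  fix w :: "'m \<Rightarrow> 'k" assume "w \<in> W_X X e"
  then show "hom_of_der d w = 0" by (rule hom_of_der_W_X[OF d])
next
  fix g h and v :: "'m \<Rightarrow> 'k" assume "g \<in> G" "h \<in> G" "v \<in> kI e"
  then show "hom_of_der d (gact e g h v) = lact g (ract (hom_of_der d v) h)"
    by (rule hom_of_der_gact[OF d])
qed (simp add: hom_of_der_def)

lemma HomV_outside: "\<phi> \<in> HV \<Longrightarrow> v \<notin> kI e \<Longrightarrow> \<phi> v = 0"
  and HomV_add: "\<phi> \<in> HV \<Longrightarrow> u \<in> kI e \<Longrightarrow> v \<in> kI e \<Longrightarrow> \<phi> (\<lambda>y. u y + v y) = \<phi> u + \<phi> v"
  and HomV_scale: "\<phi> \<in> HV \<Longrightarrow> v \<in> kI e \<Longrightarrow> \<phi> (\<lambda>y. c * v y) = scale c (\<phi> v)"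
  and HomV_W_X: "\<phi> \<in> HV \<Longrightarrow> w \<in> W_X X e \<Longrightarrow> \<phi> w = 0"
  and HomV_gact: "\<phi> \<in> HV \<Longrightarrow> g \<in> G \<Longrightarrow> h \<in> G \<Longrightarrow> v \<in> kI e \<Longrightarrow>
                   \<phi> (gact e g h v) = lact g (ract (\<phi> v) h)"
  unfolding HomV_def by blast+

lemma HomV_W_gens: assumes "\<phi> \<in> HV" and "w \<in> W_gens X e" shows "\<phi> w = 0"
proof -
  have "w \<in> W_X X e"
    unfolding W_X_def
  proof (intro CollectI exI conjI)
    show "w = (\<lambda>y. \<Sum>w'\<in>{w}. (\<lambda>_. 1) w' * w' y)" by simp
  qed (use assms(2) in auto)
  then show ?thesis using HomV_W_X[OF assms(1)] by blast
qed

lemma HomV_simX: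
  assumes p: "\<phi> \<in> HV" and ab: "(a, b) \<in> simX X e"
  shows "\<phi> (delta a) = \<phi> (delta b)"
proof -
  have a: "(delta a :: 'm \<Rightarrow> 'k) \<in> kI e" and b: "(delta b :: 'm \<Rightarrow> 'k) \<in> kI e"
    using delta_in_kI simX_subset_I_X[OF ab] by blast+
  then have b': "(\<lambda>y. (-1) * delta b y :: 'k) \<in> kI e" by (simp add: mem_kI_iff)
  have "(\<lambda>y. delta a y - delta b y :: 'k) \<in> W_gens X e"
    unfolding W_gens_def using ab by blast
  then have "0 = \<phi> (\<lambda>y. delta a y + (\<lambda>y. (-1) * delta b y) y)"
    using HomV_W_gens[OF p] by simp
  also have "\<dots> = \<phi> (delta a) + scale (-1) (\<phi> (delta b))"
    using HomV_add[OF p a b'] HomV_scale[OF p b, of "-1"] by (simp only:)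
  finally show ?thesis by (simp add: eq_neg_iff_add_eq_0)
qed

lemma HomV_Zset: assumes "\<phi> \<in> HV" and "z \<in> Zset X e" shows "\<phi> (delta z) = 0"
proof -
  have "(delta z :: 'm \<Rightarrow> 'k) \<in> W_gens X e" unfolding W_gens_def using assms(2) by (intro UnI1) auto
  then show ?thesis using HomV_W_gens[OF assms(1)] by blast
qed

lemma gact_delta:
  assumes g: "g \<in> G" and h: "h \<in> G" and x: "x \<in> IX"
  shows "gact e g h (delta x :: 'm \<Rightarrow> 'k) = delta (g * x * h)"
proof
  fix y
  have "y \<in> IX \<Longrightarrow> ginv e g * y * ginv e h = x \<longleftrightarrow> y = g * x * h"
    using ginv_translate_cancel[OF g h] x by metis
  then show "gact e g h (delta x :: 'm \<Rightarrow> 'k) y = delta (g * x * h) y"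
    unfolding gact_def delta_def using translate_in_I_X[OF g h x] by auto
qed

lemma HomV_delta_left: "\<phi> \<in> HV \<Longrightarrow> g \<in> G \<Longrightarrow> x \<in> IX \<Longrightarrow> \<phi> (delta (g * x)) = lact g (\<phi> (delta x))"
  using HomV_gact[OF _ _ idem_in_G delta_in_kI] gact_delta[OF _ idem_in_G] ract_unit
    I_X_idem_right by (simp add: mult.assoc)

lemma HomV_delta_right: "\<phi> \<in> HV \<Longrightarrow> h \<in> G \<Longrightarrow> x \<in> IX \<Longrightarrow> \<phi> (delta (x * h)) = ract (\<phi> (delta x)) h"
  using HomV_gact[OF _ idem_in_G _ delta_in_kI] gact_delta[OF idem_in_G] lact_unit I_X_idem_left
  by simp

lemma HomV_expand:
  assumes p: "\<phi> \<in> HV" and v: "v \<in> kI e"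
  shows "\<phi> v = (\<Sum>x\<in>IX. scale (v x) (\<phi> (delta x)))"
proof -
  have expand: "\<phi> (\<lambda>y. \<Sum>x\<in>S. v x * delta x y) = (\<Sum>x\<in>S. scale (v x) (\<phi> (delta x)))"
    if "S \<subseteq> IX" for S
    using finite[of S] that
  proof (induction S rule: finite_induct)
    case empty
    then show ?case using HomV_add[OF p, of "\<lambda>_. 0" "\<lambda>_. 0"] by (simp add: mem_kI_iff)
  next
    case (insert x S)
    have "(\<lambda>y. \<Sum>x\<in>S. v x * delta x y) \<in> kI e" "(\<lambda>y. v x * delta x y) \<in> kI e"
      using insert.prems unfolding mem_kI_iff delta_def by (auto intro!: sum.neutral)
    then show ?case
      using insert HomV_add[OF p] HomV_scale[OF p delta_in_kI] by simp
  qed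
  have "v = (\<lambda>y. \<Sum>x\<in>IX. v x * delta x y)"
    using v unfolding mem_kI_iff delta_def by (auto simp: if_distrib cong: if_cong)
  then have "\<phi> v = \<phi> (\<lambda>y. \<Sum>x\<in>IX. v x * delta x y)" by (rule arg_cong)
  also have "\<dots> = (\<Sum>x\<in>IX. scale (v x) (\<phi> (delta x)))" by (rule expand) simp
  finally show ?thesis .
qed

text \<open>Inverse of \<open>d \<mapsto> (restrict_G d, hom_of_der d)\<close>.\<close>

definition glue :: "('m \<Rightarrow> 'a) \<Rightarrow> (('m \<Rightarrow> 'k) \<Rightarrow> 'a) \<Rightarrow> 'm \<Rightarrow> 'a" where
  "glue D \<phi> = (\<lambda>m. if e * m * e \<in> G then D (e * m * e) else \<phi> (delta (e * m * e)))"

definition restrict_G :: "('m \<Rightarrow> 'a) \<Rightarrow> 'm \<Rightarrow> 'a" where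
  "restrict_G d = (\<lambda>g. if g \<in> G then d g else 0)"

lemma HomV_sandwich_mult:
  assumes p: "\<phi> \<in> HV" and nG: "\<not> (e * m * e \<in> G \<and> e * n * e \<in> G)"
  shows "\<phi> (delta (e * (m * n) * e)) = \<phi> (delta ((e * m * e) * (e * n * e)))"
proof -
  have x: "e * (m * n) * e \<in> IX" and "\<not> X \<subseteq> sigma (m * n)"
    using sandwich_in_I_X sandwich_mult_in_G_iff sigma_ge_iff nG by blast+
  moreover have "e * (m * e * n) * e \<in> IX"
    using sandwich_in_I_X sandwich_mult_in_G_iff nG idem_absorb(1)[OF idem_e]
    by (metis mult.assoc)
  moreover have "(e * m * e) * (e * n * e) = e * (m * e * n) * e"
    using idem_absorb[OF idem_e] by (simp add: mult.assoc)
  ultimately have "(e * (m * n) * e, (e * m * e) * (e * n * e)) \<in> gen_rel X e"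
    unfolding gen_rel_def by (auto simp: mult.assoc)
  then show ?thesis using HomV_simX[OF p] unfolding simX_def by blast
qed

lemma glue_in_Der_M:
  assumes D: "D \<in> DerG" and p: "\<phi> \<in> HV"
  shows "glue D \<phi> \<in> DerM"
  unfolding Der_M_def
proof (intro CollectI allI)
  fix m n
  define a where "a = e * m * e"
  define b where "b = e * n * e"
  show "glue D \<phi> (m * n) = lrho m (glue D \<phi> n) + rrho (glue D \<phi> m) n"
  proof (cases "a \<in> G \<and> b \<in> G")
    case True
    then show ?thesis
      using Der_GD[OF D] sandwich_mult sandwich_mult_in_G_iff G_mult_closed
      unfolding glue_def lrho_eq rrho_eq a_def b_def by simp
  next
    case False
    have "e * (m * n) * e \<notin> G" using False sandwich_mult_in_G_iff unfolding a_def b_def by blast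
    then have mn: "glue D \<phi> (m * n) = \<phi> (delta (a * b))"
      using HomV_sandwich_mult[OF p] False unfolding glue_def a_def b_def by simp
    have m: "glue D \<phi> m = (if a \<in> G then D a else \<phi> (delta a))"
      and n: "glue D \<phi> n = (if b \<in> G then D b else \<phi> (delta b))"
      unfolding glue_def a_def b_def by simp_all
    consider "a \<in> G" "b \<in> IX" | "a \<in> IX" "b \<in> G" | "a \<in> IX" "b \<in> IX"
      using False sandwich_in_I_X unfolding a_def b_def by blast
    then show ?thesis
    proof cases
      case 1
      then show ?thesis using mn n HomV_delta_left[OF p] mem_I_X_iff
        unfolding lrho_eq rrho_eq a_def b_def by simp
    next
      case 2
      then show ?thesis using mn m HomV_delta_right[OF p] mem_I_X_iff
        unfolding lrho_eq rrho_eq a_def b_def by simp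
    next
      case 3
      then show ?thesis using mn HomV_Zset[OF p] I_X_mult_in_Zset mem_I_X_iff
        unfolding lrho_eq rrho_eq a_def b_def by simp
    qed
  qed
qed

lemma restrict_G_glue: "D \<in> DerG \<Longrightarrow> restrict_G (glue D \<phi>) = D"
  unfolding restrict_G_def glue_def
  using G_idem_left G_idem_right Der_G_outside by (auto simp: mult.assoc)

lemma hom_of_der_glue: assumes p: "\<phi> \<in> HV" shows "hom_of_der (glue D \<phi>) = \<phi>"
proof
  fix v show "hom_of_der (glue D \<phi>) v = \<phi> v"
    using HomV_expand[OF p] HomV_outside[OF p] I_X_sandwich mem_I_X_iff
    unfolding hom_of_der_def glue_def by (auto intro!: sum.cong)
qed

lemma restrict_G_in_Der_G: assumes d: "d \<in> DerM" shows "restrict_G d \<in> DerG"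
  unfolding Der_G_def restrict_G_def
  using Der_MD[OF d] G_mult_closed G_idem_left G_idem_right
  unfolding lrho_eq rrho_eq by (auto simp: mult.assoc)

lemma restrict_G_fadd: "restrict_G (fadd d d') = fadd (restrict_G d) (restrict_G d')"
  and restrict_G_fscale: "restrict_G (fscale scale c d) = fscale scale c (restrict_G d)"
  and restrict_G_diff: "restrict_G (\<lambda>x. d x - d' x) = (\<lambda>x. restrict_G d x - restrict_G d' x)"
  unfolding restrict_G_def fadd_def fscale_def by auto


lemma Inn_M_diffD:
  assumes "(\<lambda>x. d x - d' x) \<in> InnM"
  shows "(\<lambda>x. restrict_G d x - restrict_G d' x) \<in> InnG" and "hom_of_der d = hom_of_der d'"
proof -
  obtain a where eq: "(\<lambda>x. d x - d' x) = (\<lambda>m. lrho m a - rrho a m)"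
    using assms unfolding Inn_M_def by blast
  have a: "d m - d' m = lrho m a - rrho a m" for m using fun_cong[OF eq, of m] by simp
  have "(\<lambda>x. restrict_G d x - restrict_G d' x) = (\<lambda>g. if g \<in> G then lact g a - ract a g else 0)"
    using a G_idem_left G_idem_right unfolding restrict_G_def lrho_eq rrho_eq by auto
  then show "(\<lambda>x. restrict_G d x - restrict_G d' x) \<in> InnG" unfolding Inn_G_def by blast
  have "d x = d' x" if "x \<in> IX" for x
    using a[of x] I_X_sandwich[OF that] that unfolding lrho_eq rrho_eq mem_I_X_iff by simp
  then show "hom_of_der d = hom_of_der d'" unfolding hom_of_der_def by (auto intro!: sum.cong)
qed

lemma Inn_M_diffI:
  assumes d: "d \<in> DerM" and d': "d' \<in> DerM"
    and G: "(\<lambda>x. restrict_G d x - restrict_G d' x) \<in> InnG"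
    and I: "hom_of_der d = hom_of_der d'"
  shows "(\<lambda>x. d x - d' x) \<in> InnM"
proof -
  obtain a where
    eq: "(\<lambda>x. restrict_G d x - restrict_G d' x) = (\<lambda>g. if g \<in> G then lact g a - ract a g else 0)"
    using G unfolding Inn_G_def by blast
  have a: "d g - d' g = lact g a - ract a g" if "g \<in> G" for g
    using fun_cong[OF eq, of g] that unfolding restrict_G_def by simp
  have I_X: "d x = d' x" if "x \<in> IX" for x
    using I hom_of_der_delta[OF that, of d] hom_of_der_delta[OF that, of d'] by simp
  have "d m - d' m = lrho m a - rrho a m" for m
  proof (cases "e * m * e \<in> G")
    case True
    then show ?thesis using a[OF True] Der_M_sandwich[OF d, of m] Der_M_sandwich[OF d', of m]
      unfolding lrho_eq rrho_eq by simp
  next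
    case False
    then show ?thesis using I_X sandwich_in_I_X Der_M_sandwich[OF d, of m] Der_M_sandwich[OF d', of m]
      unfolding lrho_eq rrho_eq by simp
  qed
  then have "(\<lambda>x. d x - d' x) = (\<lambda>m. lrho m a - rrho a m)" by (rule ext)
  then show ?thesis unfolding Inn_M_def by blast
qed

lemma lin_iso_H1_M_split:
  "lin_iso (H1_M scale X e lact ract) (prod_space (H1_G scale G lact ract) (HomV_space scale X e lact ract))"
proof -
  let ?q = "coset fadd InnG"
  let ?L = "\<lambda>d. (?q (restrict_G d), hom_of_der d)"
  have target: "prod_space (H1_G scale G lact ract) (HomV_space scale X e lact ract) =
    (?q ` DerG \<times> HV,
     \<lambda>x y. ({fadd u v | u v. u \<in> fst x \<and> v \<in> fst y}, fadd (snd x) (snd y)),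
     \<lambda>c x. ({fadd (fscale scale c u) i | u i. u \<in> fst x \<and> i \<in> InnG}, fscale scale c (snd x)))"
    unfolding prod_space_def H1_G_def quot_space_fun_eq HomV_space_def by simp
  note Inn_G = vector_space_axioms fun_subspace_Inn_G
  show ?thesis
    unfolding H1_M_def target
  proof (rule lin_iso_quot_spaceI[OF vector_space_axioms fun_subspace_Inn_M, where L = ?L])
    show "?L ` DerM = ?q ` DerG \<times> HV"
    proof
      show "?q ` DerG \<times> HV \<subseteq> ?L ` DerM"
      proof
        fix z assume "z \<in> ?q ` DerG \<times> HV"
        then obtain D \<phi> where z: "z = (?q D, \<phi>)" and D: "D \<in> DerG" and p: "\<phi> \<in> HV" by blast
        have "?L (glue D \<phi>) = z" using z restrict_G_glue[OF D] hom_of_der_glue[OF p] by simp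
        then show "z \<in> ?L ` DerM" using glue_in_Der_M[OF D p] by blast
      qed
    qed (use restrict_G_in_Der_G hom_of_der_in_HomV in blast)
  next
    fix u v assume uv: "u \<in> DerM" "v \<in> DerM"
    have "?L u = ?L v \<longleftrightarrow>
        (\<lambda>x. restrict_G u x - restrict_G v x) \<in> InnG \<and> hom_of_der u = hom_of_der v"
      using coset_eq_iff[OF Inn_G] by simp
    also have "\<dots> \<longleftrightarrow> (\<lambda>x. u x - v x) \<in> InnM"
      using Inn_M_diffD Inn_M_diffI[OF uv] by blast
    finally show "?L u = ?L v \<longleftrightarrow> (\<lambda>x. u x - v x) \<in> InnM" .
  qed (simp_all add: Inn_M_subset_Der_M Der_M_fadd Der_M_fscale restrict_G_fadd restrict_G_fscale
      hom_of_der_fadd hom_of_der_fscale coset_add[OF Inn_G] coset_scale[OF Inn_G])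
qed

lemma lin_iso_H1_M_HomV:
  assumes "of_nat (card G) \<noteq> (0::'k)"
  shows "lin_iso (H1_M scale X e lact ract) (HomV_space scale X e lact ract)"
  unfolding H1_M_def HomV_space_def
proof (rule lin_iso_quot_spaceI[OF vector_space_axioms fun_subspace_Inn_M, where L = hom_of_der])
  show "hom_of_der ` DerM = HV"
  proof
    show "HV \<subseteq> hom_of_der ` DerM"
    proof
      fix \<phi> assume p: "\<phi> \<in> HV"
      then have "hom_of_der (glue (\<lambda>_. 0) \<phi>) = \<phi>" by (rule hom_of_der_glue)
      then show "\<phi> \<in> hom_of_der ` DerM" using glue_in_Der_M[OF zero_in_Der_G p] by (metis image_eqI)
    qed
  qed (use hom_of_der_in_HomV in blast)
next
  fix u v assume uv: "u \<in> DerM" "v \<in> DerM"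
  have "(\<lambda>x. restrict_G u x - restrict_G v x) \<in> InnG"
    using Der_G_subset_Inn_G[OF assms] restrict_G_in_Der_G[OF Der_M_diff[OF uv]]
    unfolding restrict_G_diff by blast
  then show "hom_of_der u = hom_of_der v \<longleftrightarrow> (\<lambda>x. u x - v x) \<in> InnM"
    using Inn_M_diffD(2) Inn_M_diffI[OF uv] by blast
qed (simp_all add: Inn_M_subset_Der_M Der_M_fadd Der_M_fscale hom_of_der_fadd hom_of_der_fscale)

end

theorem mainTheorem15:
  fixes scale :: "'k::field \<Rightarrow> 'a::ab_group_add \<Rightarrow> 'a"
    and lact :: "'m::{monoid_mult, finite} \<Rightarrow> 'a \<Rightarrow> 'a"
    and ract :: "'a \<Rightarrow> 'm \<Rightarrow> 'a"
    and X :: "'m set" and eX :: 'm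
  assumes "rectangular TYPE('m)"
    and "splits_max_subgroups TYPE('k) TYPE('m)"
    and "X \<in> Lambda TYPE('m)"
    and "idem eX" and "ideal eX = X"
    and "GGop_module scale lact ract (units_at eX) eX"
  shows "lin_iso (H1_M scale X eX lact ract)
           (prod_space (H1_G scale (units_at eX) lact ract) (HomV_space scale X eX lact ract))
       \<and> (of_nat (card (units_at eX)) \<noteq> (0::'k) \<longrightarrow>
           lin_iso (H1_M scale X eX lact ract) (HomV_space scale X eX lact ract))"
proof -
  interpret rect_bimodule scale lact ract eX X
    using assms(1,4,5,6) by unfold_locales
  show ?thesis using lin_iso_H1_M_split lin_iso_H1_M_HomV by blast
qed

end
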